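(* Let $R$ be a connected quotient root system with base $S$, let $\Phi\subseteq R^+$, and let $\Phi = \inf_I^S(\Psi, X)$ be the canonical form of $\Phi$, where $\Psi$ is primitive. Then $\mathrm{Gen}(\Phi) = \mathrm{Gen}(X) \cup \{ S \}$, where $\mathrm{Gen}(X)$ is computed for $X$ as a subset of the positive roots $R_I^+$ of the quotient root system $R_I$ with base $I$.
   Context: Quotient root systems (QRS): a QRS $R$ is the set of non-zero images of a root system $\Delta$ (with base $\Sigma$) under the orthogonal projection of its ambient Euclidean space onto $(\mathrm{span}\,J)^\perp$ for some $J\subsetneq\Sigma$, with induced inner product; its base $S$ is the images of $\Sigma\setminus J$, and every root is an integer combination of $S$ with all coefficients $\ge0$ (positive roots $R^+$) or all $\le0$. $R$ is connected if the graph on $S$ with an edge between $\theta,\theta'$ iff $\langle\theta,\theta'\rangle<0$ is connected. For $K\subseteq S$: $R_K=R\cap\mathrm{span}\,K$ (a QRS with base $K$), $R_K^+=R_K\cap R^+$; $\pi_K$ is orthogonal projection onto $(\mathrm{span}\,K)^\perp$, $R/K$ the set of non-zero elements of $\pi_K(R)$ (a QRS with base the images of $S\setminus K$), $(R/K)^+=\pi_K(R^+)\setminus\{0\}$. Inflation: $\inf_K^S(\Psi,X):=\{\alpha\in R^+:\pi_K(\alpha)\in\Psi\}\cup X$ for $\Psi\subseteq(R/K)^+$, $X\subseteq R_K^+$; the same construction is used inside any QRS with any base (e.g. $\inf_K^I$ inside $R_I$ for $K\subseteq I$). For a QRS $R'$ with base $S'$ and $\Phi'\subseteq R'^+$, $\mathrm{Gen}(\Phi'):=\{K\subseteq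 S':\Phi'=\inf_K^{S'}(\Theta,Y)\text{ for some }\Theta,Y\}$. Primitive: $\Phi\ne\emptyset$, $\Phi\ne R^+$ and $\Phi=\inf_K^S(\Psi,X)$ implies $K\in\{\emptyset,S\}$ (same notion in $R/I$). Canonical form: for connected $R$, the unique expression $\Phi=\inf_I^S(\Psi,X)$ with $I\subsetneq S$ such that either $\Psi$ is primitive in $R/I$, or $\Psi\in\{\emptyset,(R/I)^+\}$ and $I$ is smallest with this property. *)

theory Defs
  imports "HOL-Analysis.Analysis"
begin

text \<open>A (reduced, crystallographic) root system, inside a finite-dimensional real inner
  product space (the ambient Euclidean space is the type 'a; the roots need not span it).\<close>
definition root_system :: "'a::euclidean_space set \<Rightarrow> bool" where
  "root_system \<Delta> \<longleftrightarrow>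
     finite \<Delta> \<and> 0 \<notin> \<Delta> \<and>
     (\<forall>\<alpha>\<in>\<Delta>. \<forall>\<beta>\<in>\<Delta>. \<beta> - (2 * (\<beta> \<bullet> \<alpha>) / (\<alpha> \<bullet> \<alpha>)) *\<^sub>R \<alpha> \<in> \<Delta>) \<and>
     (\<forall>\<alpha>\<in>\<Delta>. \<forall>\<beta>\<in>\<Delta>. 2 * (\<beta> \<bullet> \<alpha>) / (\<alpha> \<bullet> \<alpha>) \<in> \<int>) \<and>
     (\<forall>\<alpha>\<in>\<Delta>. \<forall>c::real. c *\<^sub>R \<alpha> \<in> \<Delta> \<longrightarrow> c = 1 \<or> c = -1)"

definition int_comb :: "'a::real_vector set \<Rightarrow> ('a \<Rightarrow> int) \<Rightarrow> 'a" where
  "int_comb B c = (\<Sum>b\<in>B. of_int (c b) *\<^sub>R b)"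

definition root_base :: "'a::euclidean_space set \<Rightarrow> 'a set \<Rightarrow> bool" where
  "root_base \<Delta> \<Sigma> \<longleftrightarrow>
     \<Sigma> \<subseteq> \<Delta> \<and> independent \<Sigma> \<and>
     (\<forall>\<alpha>\<in>\<Delta>. \<exists>c. \<alpha> = int_comb \<Sigma> c \<and> ((\<forall>\<sigma>\<in>\<Sigma>. c \<sigma> \<ge> 0) \<or> (\<forall>\<sigma>\<in>\<Sigma>. c \<sigma> \<le> 0)))"

definition perp_proj :: "'a::euclidean_space set \<Rightarrow> 'a \<Rightarrow> 'a" where
  "perp_proj K x =
     x - (THE y. y \<in> span K \<and> (\<forall>z\<in>span K. orthogonal (x - y) z))"

definition qrs :: "'a::euclidean_space set \<Rightarrow> 'a set \<Rightarrow> bool" where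
  "qrs R S \<longleftrightarrow>
     (\<exists>\<Delta> \<Sigma> J. root_system \<Delta> \<and> root_base \<Delta> \<Sigma> \<and> J \<subset> \<Sigma> \<and>
        R = perp_proj J ` \<Delta> - {0} \<and> S = perp_proj J ` (\<Sigma> - J))"

definition pos_roots :: "'a::euclidean_space set \<Rightarrow> 'a set \<Rightarrow> 'a set" where
  "pos_roots R S = {\<alpha>\<in>R. \<exists>c. \<alpha> = int_comb S c \<and> (\<forall>s\<in>S. c s \<ge> 0)}"

definition qrs_connected :: "'a::euclidean_space set \<Rightarrow> 'a set \<Rightarrow> bool" where
  "qrs_connected R S \<longleftrightarrow>
     (\<forall>\<theta>\<in>S. \<forall>\<theta>'\<in>S. (\<theta>, \<theta>') \<in> {(a, b). a \<in> S \<and> b \<in> S \<and> a \<bullet> b < 0}\<^sup>*)"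

definition sub_qrs :: "'a::euclidean_space set \<Rightarrow> 'a set \<Rightarrow> 'a set" where
  "sub_qrs R K = R \<inter> span K"

definition quot_qrs :: "'a::euclidean_space set \<Rightarrow> 'a set \<Rightarrow> 'a set" where
  "quot_qrs R K = perp_proj K ` R - {0}"

definition quot_base :: "'a::euclidean_space set \<Rightarrow> 'a set \<Rightarrow> 'a set" where
  "quot_base S K = perp_proj K ` (S - K)"

definition infl :: "'a::euclidean_space set \<Rightarrow> 'a set \<Rightarrow> 'a set \<Rightarrow> 'a set \<Rightarrow> 'a set \<Rightarrow> 'a set" where
  "infl R S K \<Psi> X = {\<alpha> \<in> pos_roots R S. perp_proj K \<alpha> \<in> \<Psi>} \<union> X"

definition infl_args :: "'a::euclidean_space set \<Rightarrow> 'a set \<Rightarrow> 'a set \<Rightarrow> 'a set \<Rightarrow> 'a set \<Rightarrow> bool" where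
  "infl_args R S K \<Psi> X \<longleftrightarrow>
     K \<subseteq> S \<and> \<Psi> \<subseteq> pos_roots (quot_qrs R K) (quot_base S K) \<and> X \<subseteq> pos_roots (sub_qrs R K) K"

definition Gen :: "'a::euclidean_space set \<Rightarrow> 'a set \<Rightarrow> 'a set \<Rightarrow> 'a set set" where
  "Gen R S \<Phi> = {K. K \<subseteq> S \<and> (\<exists>\<Theta> Y. infl_args R S K \<Theta> Y \<and> \<Phi> = infl R S K \<Theta> Y)}"

definition primitive :: "'a::euclidean_space set \<Rightarrow> 'a set \<Rightarrow> 'a set \<Rightarrow> bool" where
  "primitive R S \<Phi> \<longleftrightarrow>
     \<Phi> \<noteq> {} \<and> \<Phi> \<noteq> pos_roots R S \<and>
     (\<forall>K \<Psi> X. infl_args R S K \<Psi> X \<and> \<Phi> = infl R S K \<Psi> X \<longrightarrow> K = {} \<or> K = S)"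

definition canonical_form ::
  "'a::euclidean_space set \<Rightarrow> 'a set \<Rightarrow> 'a set \<Rightarrow> 'a set \<Rightarrow> 'a set \<Rightarrow> 'a set \<Rightarrow> bool" where
  "canonical_form R S \<Phi> I \<Psi> X \<longleftrightarrow>
     I \<subset> S \<and> infl_args R S I \<Psi> X \<and> \<Phi> = infl R S I \<Psi> X \<and>
     (primitive (quot_qrs R I) (quot_base S I) \<Psi> \<or>
      ((\<Psi> = {} \<or> \<Psi> = pos_roots (quot_qrs R I) (quot_base S I)) \<and>
       (\<forall>I' \<Psi>' X'. I' \<subset> S \<and> infl_args R S I' \<Psi>' X' \<and> \<Phi> = infl R S I' \<Psi>' X' \<and>
          (\<Psi>' = {} \<or> \<Psi>' = pos_roots (quot_qrs R I') (quot_base S I')) \<longrightarrow> I \<subseteq> I')))"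

end

(*
  K generates Phi exactly when, among positive roots outside span K, membership in Phi depends
  only on the image under the projection pi_K ("Phi is pi_K-saturated"). Saturation is stable
  under unions: if Phi is saturated for I and for K, lift two positive roots of R whose difference
  lies in span (I \<union> K) to the root system Delta; the lifts have equal coordinates off I \<union> K
  and are joined by a chain of simple-root steps inside the coordinate box they span, each step
  being absorbed by the I- or the K-saturation.

  Now let K generate Phi with K \<noteq> S. Then I \<union> K generates Phi and lies above I, and
  primitivity of Psi forces I \<union> K to be I or S. In the second case connectedness of the Dynkin
  diagram yields a simple root s outside I such that Phi is constant on all positive roots involving
  s; then S - {s} generates Phi, so it equals I, and Phi would be constant off span I, which
  contradicts primitivity again. Hence K \<subseteq> I, and for such K generating Phi is the same
  as generating X = Phi \<inter> span I inside R_I.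
*)

theory Submission
  imports Defs
begin

section \<open>Orthogonal projections and coordinates\<close>

lemma perp_proj_eqI:
  fixes x p :: "'a::euclidean_space"
  assumes "x - p \<in> span K" and "\<And>z. z \<in> span K \<Longrightarrow> p \<bullet> z = 0"
  shows "perp_proj K x = p"
proof -
  have "(THE y. y \<in> span K \<and> (\<forall>z\<in>span K. orthogonal (x - y) z)) = x - p"
  proof (rule the_equality)
    show "x - p \<in> span K \<and> (\<forall>z\<in>span K. orthogonal (x - (x - p)) z)"
      using assms by (simp add: orthogonal_def)
  next
    fix y assume y: "y \<in> span K \<and> (\<forall>z\<in>span K. orthogonal (x - y) z)"
    define d where "d = (x - p) - y"
    have "d \<in> span K" unfolding d_def using y assms(1) span_diff by blast
    then have "(x - y) \<bullet> d = 0" "p \<bullet> d = 0"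
      using y assms(2) by (auto simp: orthogonal_def)
    moreover have "d = (x - y) - p" unfolding d_def by simp
    ultimately have "d \<bullet> d = 0" by (metis inner_diff_left diff_zero)
    then show "y = x - p" unfolding d_def by simp
  qed
  then show ?thesis unfolding perp_proj_def by simp
qed

lemma
  fixes x :: "'a::euclidean_space"
  shows diff_perp_proj_in_span: "x - perp_proj K x \<in> span K"
    and perp_proj_orthogonal: "z \<in> span K \<Longrightarrow> perp_proj K x \<bullet> z = 0"
proof -
  obtain y w where "y \<in> span K" "\<And>z. z \<in> span K \<Longrightarrow> orthogonal w z" "x = y + w"
    using orthogonal_subspace_decomp_exists by blast
  then have "perp_proj K x = w"
    by (intro perp_proj_eqI) (auto simp: orthogonal_def)
  with \<open>y \<in> span K\<close> \<open>x = y + w\<close> \<open>\<And>z. z \<in> span K \<Longrightarrow> orthogonal w z\<close>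
  show "x - perp_proj K x \<in> span K" and "z \<in> span K \<Longrightarrow> perp_proj K x \<bullet> z = 0"
    by (auto simp: orthogonal_def)
qed

lemma perp_proj_add: "perp_proj K (x + y) = perp_proj K x + perp_proj K y"
proof (rule perp_proj_eqI)
  have "(x - perp_proj K x) + (y - perp_proj K y) \<in> span K"
    by (intro span_add diff_perp_proj_in_span)
  then show "x + y - (perp_proj K x + perp_proj K y) \<in> span K"
    by (simp add: algebra_simps)
qed (simp add: inner_add_left perp_proj_orthogonal)

lemma perp_proj_scaleR: "perp_proj K (c *\<^sub>R x) = c *\<^sub>R perp_proj K x"
proof (rule perp_proj_eqI)
  have "c *\<^sub>R (x - perp_proj K x) \<in> span K"
    by (intro span_mul diff_perp_proj_in_span)
  then show "c *\<^sub>R x - c *\<^sub>R perp_proj K x \<in> span K"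
    by (simp add: algebra_simps)
qed (simp add: perp_proj_orthogonal)

lemma linear_perp_proj: "linear (perp_proj K)"
  by (rule linearI) (simp_all add: perp_proj_add perp_proj_scaleR)

lemma perp_proj_diff: "perp_proj K (x - y) = perp_proj K x - perp_proj K y"
  using linear_diff[OF linear_perp_proj] .

lemma perp_proj_sum: "perp_proj K (sum f A) = (\<Sum>a\<in>A. perp_proj K (f a))"
  using linear_sum[OF linear_perp_proj] .

lemma perp_proj_eq_0_iff: "perp_proj K x = 0 \<longleftrightarrow> x \<in> span K"
proof
  show "perp_proj K x = 0 \<Longrightarrow> x \<in> span K"
    using diff_perp_proj_in_span[of x K] by simp
  show "x \<in> span K \<Longrightarrow> perp_proj K x = 0"
    by (rule perp_proj_eqI) simp_all
qed

lemma perp_proj_eq_iff: "perp_proj K x = perp_proj K y \<longleftrightarrow> x - y \<in> span K"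
  by (metis perp_proj_diff perp_proj_eq_0_iff eq_iff_diff_eq_0)

lemma perp_proj_in_span_image_iff:
  "perp_proj I x \<in> span (perp_proj I ` M) \<longleftrightarrow> x \<in> span (I \<union> M)"
proof
  assume "perp_proj I x \<in> span (perp_proj I ` M)"
  then obtain m where m: "m \<in> span M" "perp_proj I x = perp_proj I m"
    unfolding span_linear_image[OF linear_perp_proj] by blast
  then have "(x - m) + m \<in> span (I \<union> M)"
    using perp_proj_eq_iff span_mono[of I "I \<union> M"] span_mono[of M "I \<union> M"] span_add
    by (metis Un_upper1 Un_upper2 subsetD)
  then show "x \<in> span (I \<union> M)" by simp
next
  assume "x \<in> span (I \<union> M)"
  then have "perp_proj I x \<in> span (perp_proj I ` (I \<union> M))"
    unfolding span_linear_image[OF linear_perp_proj] by blast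
  moreover have "perp_proj I ` (I \<union> M) \<subseteq> insert 0 (perp_proj I ` M)"
    using perp_proj_eq_0_iff span_base by fastforce
  then have "span (perp_proj I ` (I \<union> M)) \<subseteq> span (perp_proj I ` M)"
    using span_mono span_insert_0 by metis
  ultimately show "perp_proj I x \<in> span (perp_proj I ` M)" by blast
qed

lemma representation_lincomb:
  fixes B :: "'a::real_vector set"
  assumes "finite B" "independent B" "b \<in> B"
  shows "representation B (\<Sum>v\<in>B. c v *\<^sub>R v) b = c b"
proof -
  have "representation B (\<Sum>v\<in>B. c v *\<^sub>R v) b = (\<Sum>v\<in>B. c v * representation B v b)"
    using assms(2) by (simp add: representation_sum representation_scale span_base span_mul)
  also have "\<dots> = (\<Sum>v\<in>B. if v = b then c v else 0)"
    using assms(2) by (intro sum.cong) (auto simp: representation_basis)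
  also have "\<dots> = c b" using assms(1,3) by simp
  finally show ?thesis .
qed

lemma in_span_subset_iff_representation:
  fixes B :: "'a::real_vector set"
  assumes "independent B" "x \<in> span B" "T \<subseteq> B"
  shows "x \<in> span T \<longleftrightarrow> (\<forall>b\<in>B - T. representation B x b = 0)"
proof
  assume "x \<in> span T"
  then have "representation B x = representation T x"
    by (rule representation_extend[OF assms(1) _ assms(3)])
  then show "\<forall>b\<in>B - T. representation B x b = 0"
    using representation_ne_zero[of T x] by auto
next
  assume zero: "\<forall>b\<in>B - T. representation B x b = 0"
  have "x = (\<Sum>b | representation B x b \<noteq> 0. representation B x b *\<^sub>R b)"
    using sum_nonzero_representation_eq[OF assms(1,2)] by simp
  also have "\<dots> \<in> span T"
    using zero representation_ne_zero
    by (intro span_sum span_mul span_base) blast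
  finally show "x \<in> span T" .
qed

lemma inj_on_perp_proj:
  fixes S :: "'a::euclidean_space set"
  assumes "independent S" "K \<subseteq> S"
  shows "inj_on (perp_proj K) (S - K)"
proof (rule inj_onI)
  fix s t assume st: "s \<in> S - K" "t \<in> S - K" "perp_proj K s = perp_proj K t"
  have "s - t \<in> span S" using st(1,2) by (intro span_diff span_base) auto
  moreover have "s - t \<in> span K" using st(3) perp_proj_eq_iff by blast
  ultimately have "representation S (s - t) s = 0"
    using in_span_subset_iff_representation[OF assms(1) _ assms(2)] st(1) by blast
  then show "s = t"
    using st assms(1) by (auto simp: representation_diff span_base representation_basis split: if_splits)
qed

lemma perp_proj_lincomb:
  fixes S :: "'a::euclidean_space set"
  assumes "finite S" "independent S" "K \<subseteq> S"
  shows "perp_proj K (\<Sum>s\<in>S. c s *\<^sub>R s) =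
    (\<Sum>t\<in>quot_base S K. c (inv_into (S - K) (perp_proj K) t) *\<^sub>R t)"
proof -
  have "perp_proj K (\<Sum>s\<in>S. c s *\<^sub>R s) = (\<Sum>s\<in>S - K. c s *\<^sub>R perp_proj K s)"
    using assms by (auto simp: perp_proj_sum perp_proj_scaleR perp_proj_eq_0_iff span_base
        intro!: sum.mono_neutral_right)
  also have "\<dots> = (\<Sum>t\<in>quot_base S K. c (inv_into (S - K) (perp_proj K) t) *\<^sub>R t)"
    unfolding quot_base_def using inj_on_perp_proj[OF assms(2,3)]
    by (subst sum.reindex) (auto intro!: sum.cong)
  finally show ?thesis .
qed

lemma independent_quot_base:
  fixes S :: "'a::euclidean_space set"
  assumes "finite S" "independent S" "K \<subseteq> S"
  shows "independent (quot_base S K)"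
proof -
  let ?p = "perp_proj K"
  have fin: "finite (quot_base S K)" using assms(1) unfolding quot_base_def by simp
  have "u t = 0" if dep: "(\<Sum>w\<in>quot_base S K. u w *\<^sub>R w) = 0" and t: "t \<in> quot_base S K" for u t
  proof -
    define c where "c s = (if s \<in> S - K then u (?p s) else 0)" for s
    have "?p (\<Sum>s\<in>S. c s *\<^sub>R s) = (\<Sum>w\<in>quot_base S K. u w *\<^sub>R w)"
      unfolding perp_proj_lincomb[OF assms] c_def quot_base_def
      using inj_on_perp_proj[OF assms(2,3)] by (intro sum.cong) auto
    then have "(\<Sum>s\<in>S. c s *\<^sub>R s) \<in> span K" using dep perp_proj_eq_0_iff by metis
    moreover obtain s where "s \<in> S - K" "t = ?p s" using t unfolding quot_base_def by blast
    moreover have "(\<Sum>s\<in>S. c s *\<^sub>R s) \<in> span S"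
      by (intro span_sum span_mul span_base)
    ultimately have "representation S (\<Sum>s\<in>S. c s *\<^sub>R s) s = 0"
      using in_span_subset_iff_representation[OF assms(2) _ assms(3)] by blast
    then show "u t = 0"
      using representation_lincomb[OF assms(1,2)] \<open>s \<in> S - K\<close> \<open>t = ?p s\<close>
      unfolding c_def by simp
  qed
  then show ?thesis using fin by (auto simp: dependent_finite)
qed

lemma representation_perp_proj:
  fixes S :: "'a::euclidean_space set"
  assumes "finite S" "independent S" "K \<subseteq> S" "x \<in> span S" "s \<in> S - K"
  shows "representation (quot_base S K) (perp_proj K x) (perp_proj K s) = representation S x s"
proof -
  have "perp_proj K x = perp_proj K (\<Sum>v\<in>S. representation S x v *\<^sub>R v)"
    using real_vector.sum_representation_eq[OF assms(2,4,1)] by simp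
  also have "\<dots> = (\<Sum>t\<in>quot_base S K. representation S x (inv_into (S - K) (perp_proj K) t) *\<^sub>R t)"
    by (rule perp_proj_lincomb[OF assms(1-3)])
  finally show ?thesis
    using representation_lincomb[OF _ independent_quot_base[OF assms(1-3)]] assms(1,5)
      inj_on_perp_proj[OF assms(2,3)] unfolding quot_base_def by auto
qed

lemma perp_proj_in_span_quot_base_iff:
  fixes S :: "'a::euclidean_space set"
  assumes "independent S" "K \<subseteq> S" "x \<in> span S" "T \<subseteq> quot_base S K"
  shows "perp_proj K x \<in> span T \<longleftrightarrow> (\<forall>s\<in>S - K. perp_proj K s \<notin> T \<longrightarrow> representation S x s = 0)"
proof -
  define M where "M = {s \<in> S - K. perp_proj K s \<in> T}"
  have "T = perp_proj K ` M" using assms(4) unfolding M_def quot_base_def by blast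
  then have "perp_proj K x \<in> span T \<longleftrightarrow> x \<in> span (K \<union> M)"
    using perp_proj_in_span_image_iff by blast
  also have "\<dots> \<longleftrightarrow> (\<forall>s\<in>S - (K \<union> M). representation S x s = 0)"
    using assms(2) unfolding M_def by (intro in_span_subset_iff_representation[OF assms(1,3)]) blast
  finally show ?thesis unfolding M_def by blast
qed

lemma int_comb_in_span: "finite B \<Longrightarrow> int_comb B c \<in> span B"
  unfolding int_comb_def by (intro span_sum span_mul span_base)

lemma representation_int_comb:
  fixes B :: "'a::euclidean_space set"
  assumes "finite B" "independent B" "b \<in> B"
  shows "representation B (int_comb B c) b = of_int (c b)"
  unfolding int_comb_def using representation_lincomb[OF assms] by simp

lemma int_comb_representation:
  fixes B :: "'a::euclidean_space set"
  assumes "finite B" "independent B" "x \<in> span B" "\<forall>b\<in>B. representation B x b \<in> \<int>"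
  shows "x = int_comb B (\<lambda>b. \<lfloor>representation B x b\<rfloor>)"
proof -
  have "int_comb B (\<lambda>b. \<lfloor>representation B x b\<rfloor>) = (\<Sum>b\<in>B. representation B x b *\<^sub>R b)"
    unfolding int_comb_def using assms(4) by (intro sum.cong) (auto elim: Ints_cases)
  then show ?thesis using real_vector.sum_representation_eq[OF assms(2,3,1)] by simp
qed

section \<open>Signed integral bases, sub- and quotient systems\<close>

(* The properties of a QRS with base S used by the calculus of generating sets; unlike qrs itself,
   they are inherited by R_K and R/K with a direct proof. *)
definition signed_base :: "'a::euclidean_space set \<Rightarrow> 'a set \<Rightarrow> bool" where
  "signed_base R S \<longleftrightarrow> finite S \<and> independent S \<and>
     (\<forall>\<alpha>\<in>R. \<alpha> \<in> span S \<and> (\<forall>s\<in>S. representation S \<alpha> s \<in> \<int>) \<and>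
        ((\<forall>s\<in>S. 0 \<le> representation S \<alpha> s) \<or> (\<forall>s\<in>S. representation S \<alpha> s \<le> 0)))"

lemma signed_baseD:
  assumes "signed_base R S"
  shows "finite S" "independent S" "\<alpha> \<in> R \<Longrightarrow> \<alpha> \<in> span S"
    "\<alpha> \<in> R \<Longrightarrow> s \<in> S \<Longrightarrow> representation S \<alpha> s \<in> \<int>"
    "\<alpha> \<in> R \<Longrightarrow> (\<forall>s\<in>S. 0 \<le> representation S \<alpha> s) \<or> (\<forall>s\<in>S. representation S \<alpha> s \<le> 0)"
  using assms by (auto simp: signed_base_def)

lemma root_base_signed_base:
  assumes "root_base \<Delta> \<Sigma>"
  shows "signed_base \<Delta> \<Sigma>"
proof -
  have fi: "finite \<Sigma>" "independent \<Sigma>"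
    using assms finiteI_independent unfolding root_base_def by blast+
  have "\<alpha> \<in> span \<Sigma> \<and> (\<forall>\<sigma>\<in>\<Sigma>. representation \<Sigma> \<alpha> \<sigma> \<in> \<int>) \<and>
      ((\<forall>\<sigma>\<in>\<Sigma>. 0 \<le> representation \<Sigma> \<alpha> \<sigma>) \<or> (\<forall>\<sigma>\<in>\<Sigma>. representation \<Sigma> \<alpha> \<sigma> \<le> 0))"
    if "\<alpha> \<in> \<Delta>" for \<alpha>
  proof -
    obtain c where "\<alpha> = int_comb \<Sigma> c" "(\<forall>\<sigma>\<in>\<Sigma>. c \<sigma> \<ge> 0) \<or> (\<forall>\<sigma>\<in>\<Sigma>. c \<sigma> \<le> 0)"
      using assms \<open>\<alpha> \<in> \<Delta>\<close> unfolding root_base_def by blast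
    then show ?thesis using int_comb_in_span[OF fi(1)] representation_int_comb[OF fi] by auto
  qed
  then show ?thesis using fi unfolding signed_base_def by blast
qed

lemma pos_roots_subset: "pos_roots R S \<subseteq> R"
  unfolding pos_roots_def by blast

lemma pos_roots_iff:
  assumes "signed_base R S"
  shows "\<alpha> \<in> pos_roots R S \<longleftrightarrow> \<alpha> \<in> R \<and> (\<forall>s\<in>S. 0 \<le> representation S \<alpha> s)"
proof
  assume "\<alpha> \<in> pos_roots R S"
  then obtain c where "\<alpha> \<in> R" "\<alpha> = int_comb S c" "\<forall>s\<in>S. c s \<ge> 0"
    unfolding pos_roots_def by blast
  then show "\<alpha> \<in> R \<and> (\<forall>s\<in>S. 0 \<le> representation S \<alpha> s)"
    by (simp add: representation_int_comb[OF signed_baseD(1,2)[OF assms]])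
next
  assume \<alpha>: "\<alpha> \<in> R \<and> (\<forall>s\<in>S. 0 \<le> representation S \<alpha> s)"
  then have "\<alpha> = int_comb S (\<lambda>s. \<lfloor>representation S \<alpha> s\<rfloor>)"
    using signed_baseD[OF assms] by (intro int_comb_representation) auto
  then show "\<alpha> \<in> pos_roots R S" using \<alpha> unfolding pos_roots_def by fastforce
qed

lemma signed_base_sub_qrs:
  assumes "signed_base R S" "K \<subseteq> S"
  shows "signed_base (sub_qrs R K) K"
proof -
  note S = signed_baseD[OF assms(1)]
  have "\<alpha> \<in> span K \<and> (\<forall>s\<in>K. representation K \<alpha> s \<in> \<int>) \<and>
      ((\<forall>s\<in>K. 0 \<le> representation K \<alpha> s) \<or> (\<forall>s\<in>K. representation K \<alpha> s \<le> 0))"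
    if "\<alpha> \<in> sub_qrs R K" for \<alpha>
  proof -
    from that have \<alpha>: "\<alpha> \<in> R" "\<alpha> \<in> span K" by (auto simp: sub_qrs_def)
    have "representation K \<alpha> = representation S \<alpha>"
      by (rule representation_extend[OF S(2) \<alpha>(2) assms(2), symmetric])
    then show ?thesis using \<alpha>(2) S(4,5)[OF \<alpha>(1)] assms(2) by auto
  qed
  moreover have "finite K" using S(1) assms(2) by (rule finite_subset[rotated])
  moreover have "independent K" using S(2) assms(2) by (rule independent_mono)
  ultimately show ?thesis unfolding signed_base_def by blast
qed

lemma perp_proj_in_span_quot_base:
  fixes S :: "'a::euclidean_space set"
  assumes "independent S" "K \<subseteq> S" "x \<in> span S"
  shows "perp_proj K x \<in> span (quot_base S K)"
  using perp_proj_in_span_quot_base_iff[OF assms order_refl] unfolding quot_base_def by blast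

lemma signed_base_quot_qrs:
  assumes "signed_base R S" "K \<subseteq> S"
  shows "signed_base (quot_qrs R K) (quot_base S K)"
proof -
  note S = signed_baseD[OF assms(1)]
  have "perp_proj K \<alpha> \<in> span (quot_base S K) \<and>
      (\<forall>t\<in>quot_base S K. representation (quot_base S K) (perp_proj K \<alpha>) t \<in> \<int>) \<and>
      ((\<forall>t\<in>quot_base S K. 0 \<le> representation (quot_base S K) (perp_proj K \<alpha>) t) \<or>
       (\<forall>t\<in>quot_base S K. representation (quot_base S K) (perp_proj K \<alpha>) t \<le> 0))"
    if "\<alpha> \<in> R" for \<alpha>
    using perp_proj_in_span_quot_base[OF S(2) assms(2) S(3)[OF that]] S(4,5)[OF that]
      representation_perp_proj[OF S(1,2) assms(2) S(3)[OF that]] unfolding quot_base_def by auto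
  moreover have "finite (quot_base S K)" using S(1) unfolding quot_base_def by simp
  ultimately show ?thesis
    using independent_quot_base[OF S(1,2) assms(2)] unfolding signed_base_def quot_qrs_def by blast
qed

lemma perp_proj_pos_roots:
  assumes "signed_base R S" "K \<subseteq> S" "\<alpha> \<in> pos_roots R S" "\<alpha> \<notin> span K"
  shows "perp_proj K \<alpha> \<in> pos_roots (quot_qrs R K) (quot_base S K)"
proof -
  note S = signed_baseD[OF assms(1)]
  have \<alpha>: "\<alpha> \<in> R" "\<forall>s\<in>S. 0 \<le> representation S \<alpha> s" using assms(3) pos_roots_iff[OF assms(1)] by auto
  have "perp_proj K \<alpha> \<in> quot_qrs R K"
    using \<alpha>(1) assms(4) perp_proj_eq_0_iff unfolding quot_qrs_def by blast
  moreover have "\<forall>t\<in>quot_base S K. 0 \<le> representation (quot_base S K) (perp_proj K \<alpha>) t"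
    using representation_perp_proj[OF S(1,2) assms(2) S(3)[OF \<alpha>(1)]] \<alpha>(2)
    unfolding quot_base_def by auto
  ultimately show ?thesis using pos_roots_iff[OF signed_base_quot_qrs[OF assms(1,2)]] by blast
qed

lemma pos_roots_quot_lift:
  assumes "signed_base R S" "K \<subseteq> S" "\<beta> \<in> pos_roots (quot_qrs R K) (quot_base S K)"
  obtains \<alpha> where "\<alpha> \<in> pos_roots R S" "\<alpha> \<notin> span K" "perp_proj K \<alpha> = \<beta>"
proof -
  note S = signed_baseD[OF assms(1)]
  note Q = signed_baseD[OF signed_base_quot_qrs[OF assms(1,2)]]
  have \<beta>: "\<beta> \<in> quot_qrs R K" "\<forall>t\<in>quot_base S K. 0 \<le> representation (quot_base S K) \<beta> t"
    using assms(3) pos_roots_iff[OF signed_base_quot_qrs[OF assms(1,2)]] by auto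
  obtain \<alpha> where \<alpha>: "\<alpha> \<in> R" "perp_proj K \<alpha> = \<beta>" "\<beta> \<noteq> 0"
    using \<beta>(1) unfolding quot_qrs_def by blast
  have rep: "representation (quot_base S K) \<beta> (perp_proj K s) = representation S \<alpha> s" if "s \<in> S - K" for s
    using representation_perp_proj[OF S(1,2) assms(2) S(3)[OF \<alpha>(1)] that] \<alpha>(2) by simp
  have "\<forall>s\<in>S. 0 \<le> representation S \<alpha> s"
  proof (rule ccontr)
    assume "\<not> ?thesis"
    \<comment> \<open>then \<open>\<alpha>\<close> is a negative root and \<open>\<beta> \<noteq> 0\<close> would have non-positive coordinates\<close>
    then have "\<forall>s\<in>S. representation S \<alpha> s \<le> 0" using S(5)[OF \<alpha>(1)] by blast
    have "representation (quot_base S K) \<beta> t = 0" if t: "t \<in> quot_base S K" for t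
    proof -
      obtain s where s: "s \<in> S - K" "t = perp_proj K s" using t unfolding quot_base_def by blast
      have "representation (quot_base S K) \<beta> t \<le> 0"
        using rep[OF s(1)] s \<open>\<forall>s\<in>S. representation S \<alpha> s \<le> 0\<close> by simp
      then show ?thesis using \<beta>(2) t by (simp add: antisym)
    qed
    then have "\<beta> = 0"
      using real_vector.sum_representation_eq[OF Q(2) Q(3)[OF \<beta>(1)] Q(1) order_refl] by simp
    with \<alpha>(3) show False ..
  qed
  show ?thesis
  proof (rule that)
    show "\<alpha> \<in> pos_roots R S" using \<open>\<forall>s\<in>S. 0 \<le> representation S \<alpha> s\<close> \<alpha>(1)
      by (simp add: pos_roots_iff[OF assms(1)])
    show "\<alpha> \<notin> span K" using \<alpha>(2,3) perp_proj_eq_0_iff by blast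
  qed (rule \<alpha>(2))
qed

lemma pos_roots_sub_qrs_iff:
  assumes "signed_base R S" "K \<subseteq> S"
  shows "\<alpha> \<in> pos_roots (sub_qrs R K) K \<longleftrightarrow> \<alpha> \<in> pos_roots R S \<and> \<alpha> \<in> span K"
proof (cases "\<alpha> \<in> span K")
  case True
  note S = signed_baseD[OF assms(1)]
  have rep: "representation K \<alpha> = representation S \<alpha>"
    by (rule representation_extend[OF S(2) True assms(2), symmetric])
  have "\<alpha> \<in> span S" using span_mono[OF assms(2)] True by blast
  from in_span_subset_iff_representation[OF S(2) this assms(2)] True
  have "\<forall>s\<in>S - K. representation S \<alpha> s = 0" by simp
  then have "(\<forall>s\<in>K. 0 \<le> representation K \<alpha> s) \<longleftrightarrow> (\<forall>s\<in>S. 0 \<le> representation S \<alpha> s)"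
    unfolding rep using assms(2) by auto
  moreover have "\<alpha> \<in> sub_qrs R K \<longleftrightarrow> \<alpha> \<in> R" using True by (simp add: sub_qrs_def)
  ultimately show ?thesis
    using True by (simp add: pos_roots_iff[OF signed_base_sub_qrs[OF assms]] pos_roots_iff[OF assms(1)])
next
  case False
  then have "\<alpha> \<notin> sub_qrs R K" by (simp add: sub_qrs_def)
  then show ?thesis using False pos_roots_subset by blast
qed

section \<open>Generating sets as saturation properties\<close>

lemma not_in_span_if_diff_in_span:
  assumes "\<alpha> - \<beta> \<in> span K" "\<alpha> \<notin> span K"
  shows "\<beta> \<notin> span K"
  by (metis assms diff_add_cancel span_add)

definition proj_saturated :: "'a::euclidean_space set \<Rightarrow> 'a set \<Rightarrow> 'a set \<Rightarrow> 'a set \<Rightarrow> bool" where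
  "proj_saturated R S K \<Phi> \<longleftrightarrow>
     (\<forall>\<alpha>\<in>pos_roots R S. \<forall>\<beta>\<in>pos_roots R S. \<alpha> \<notin> span K \<longrightarrow> \<alpha> - \<beta> \<in> span K \<longrightarrow> (\<alpha> \<in> \<Phi> \<longleftrightarrow> \<beta> \<in> \<Phi>))"

lemma proj_saturatedD:
  "proj_saturated R S K \<Phi> \<Longrightarrow> \<alpha> \<in> pos_roots R S \<Longrightarrow> \<beta> \<in> pos_roots R S \<Longrightarrow> \<alpha> \<notin> span K \<Longrightarrow>
    \<alpha> - \<beta> \<in> span K \<Longrightarrow> \<alpha> \<in> \<Phi> \<longleftrightarrow> \<beta> \<in> \<Phi>"
  unfolding proj_saturated_def by blast

lemma infl_saturated_image:
  assumes \<Phi>: "\<Phi> \<subseteq> pos_roots R S" and sat: "proj_saturated R S K \<Phi>"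
  shows "infl R S K (perp_proj K ` (\<Phi> - span K)) (\<Phi> \<inter> span K) = \<Phi>"
proof
  show "\<Phi> \<subseteq> infl R S K (perp_proj K ` (\<Phi> - span K)) (\<Phi> \<inter> span K)"
    unfolding infl_def using \<Phi> by blast
  show "infl R S K (perp_proj K ` (\<Phi> - span K)) (\<Phi> \<inter> span K) \<subseteq> \<Phi>"
  proof
    fix \<alpha> assume "\<alpha> \<in> infl R S K (perp_proj K ` (\<Phi> - span K)) (\<Phi> \<inter> span K)"
    then consider "\<alpha> \<in> \<Phi>" | \<beta> where "\<alpha> \<in> pos_roots R S" "\<beta> \<in> \<Phi>" "\<beta> \<notin> span K"
        "perp_proj K \<alpha> = perp_proj K \<beta>"
      unfolding infl_def by blast
    then show "\<alpha> \<in> \<Phi>"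
    proof cases
      case 2
      then have "\<beta> - \<alpha> \<in> span K" using perp_proj_eq_iff by metis
      then show ?thesis using proj_saturatedD[OF sat _ 2(1) 2(3)] 2(2) \<Phi> by blast
    qed
  qed
qed

lemma Gen_iff_proj_saturated:
  assumes R: "signed_base R S" and \<Phi>: "\<Phi> \<subseteq> pos_roots R S" and K: "K \<subseteq> S"
  shows "K \<in> Gen R S \<Phi> \<longleftrightarrow> proj_saturated R S K \<Phi>"
proof
  assume "K \<in> Gen R S \<Phi>"
  then obtain \<Theta> Y where args: "infl_args R S K \<Theta> Y" and eq: "\<Phi> = infl R S K \<Theta> Y"
    unfolding Gen_def by blast
  have Y: "Y \<subseteq> span K"
    using args unfolding infl_args_def by (auto simp: pos_roots_sub_qrs_iff[OF R K])
  show "proj_saturated R S K \<Phi>"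
    unfolding proj_saturated_def
  proof (intro ballI impI)
    fix \<alpha> \<beta> assume \<alpha>\<beta>: "\<alpha> \<in> pos_roots R S" "\<beta> \<in> pos_roots R S" "\<alpha> \<notin> span K" "\<alpha> - \<beta> \<in> span K"
    have "\<beta> \<notin> span K" using \<alpha>\<beta>(3,4) by (rule not_in_span_if_diff_in_span[rotated])
    moreover have "perp_proj K \<alpha> = perp_proj K \<beta>" using \<alpha>\<beta>(4) by (simp add: perp_proj_eq_iff)
    ultimately show "\<alpha> \<in> \<Phi> \<longleftrightarrow> \<beta> \<in> \<Phi>" using \<alpha>\<beta>(1-3) Y unfolding eq infl_def by auto
  qed
next
  assume sat: "proj_saturated R S K \<Phi>"
  have "perp_proj K ` (\<Phi> - span K) \<subseteq> pos_roots (quot_qrs R K) (quot_base S K)"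
    using \<Phi> perp_proj_pos_roots[OF R K] by blast
  moreover have "\<Phi> \<inter> span K \<subseteq> pos_roots (sub_qrs R K) K"
    using \<Phi> by (auto simp: pos_roots_sub_qrs_iff[OF R K])
  ultimately show "K \<in> Gen R S \<Phi>"
    using infl_saturated_image[OF \<Phi> sat] K unfolding Gen_def infl_args_def by blast
qed

lemma S_in_Gen:
  assumes "signed_base R S" "\<Phi> \<subseteq> pos_roots R S"
  shows "S \<in> Gen R S \<Phi>"
  using Gen_iff_proj_saturated[OF assms order_refl] signed_baseD(3)[OF assms(1)] pos_roots_subset
  unfolding proj_saturated_def by blast

lemma infl_subset_pos_roots:
  assumes "signed_base R S" "infl_args R S I \<Psi> X"
  shows "infl R S I \<Psi> X \<subseteq> pos_roots R S"
  using assms pos_roots_sub_qrs_iff unfolding infl_def infl_args_def by blast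

lemma
  assumes R: "signed_base R S" and args: "infl_args R S I \<Psi> X"
  shows infl_inter_span: "infl R S I \<Psi> X \<inter> span I = X"
    and mem_infl_iff: "\<alpha> \<notin> span I \<Longrightarrow> \<alpha> \<in> infl R S I \<Psi> X \<longleftrightarrow> \<alpha> \<in> pos_roots R S \<and> perp_proj I \<alpha> \<in> \<Psi>"
proof -
  have I: "I \<subseteq> S" and X: "X \<subseteq> span I" and \<Psi>0: "0 \<notin> \<Psi>"
    using args pos_roots_sub_qrs_iff[OF R] pos_roots_subset
    unfolding infl_args_def quot_qrs_def by blast+
  have "perp_proj I \<alpha> \<notin> \<Psi>" if "\<alpha> \<in> span I" for \<alpha>
    using that \<Psi>0 perp_proj_eq_0_iff by metis
  then show "infl R S I \<Psi> X \<inter> span I = X"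
    using X unfolding infl_def by blast
  show "\<alpha> \<notin> span I \<Longrightarrow> \<alpha> \<in> infl R S I \<Psi> X \<longleftrightarrow> \<alpha> \<in> pos_roots R S \<and> perp_proj I \<alpha> \<in> \<Psi>"
    using X unfolding infl_def by blast
qed

lemma proj_saturated_infl:
  assumes "signed_base R S" "infl_args R S I \<Psi> X"
  shows "proj_saturated R S I (infl R S I \<Psi> X)"
proof -
  have "I \<subseteq> S" using assms(2) unfolding infl_args_def by blast
  moreover have "I \<in> Gen R S (infl R S I \<Psi> X)" using assms(2) calculation unfolding Gen_def by blast
  ultimately show ?thesis using Gen_iff_proj_saturated[OF assms(1) infl_subset_pos_roots[OF assms]] by blast
qed

lemma proj_saturated_sub_qrs_iff:
  assumes R: "signed_base R S" and I: "I \<subseteq> S" and K: "K \<subseteq> I" and satI: "proj_saturated R S I \<Phi>"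
  shows "proj_saturated R S K \<Phi> \<longleftrightarrow> proj_saturated (sub_qrs R I) I K (\<Phi> \<inter> span I)"
proof
  note pos_sub = pos_roots_sub_qrs_iff[OF R I]
  assume satK: "proj_saturated R S K \<Phi>"
  show "proj_saturated (sub_qrs R I) I K (\<Phi> \<inter> span I)"
    unfolding proj_saturated_def
  proof (intro ballI impI)
    fix \<alpha> \<beta> assume "\<alpha> \<in> pos_roots (sub_qrs R I) I" "\<beta> \<in> pos_roots (sub_qrs R I) I"
      "\<alpha> \<notin> span K" "\<alpha> - \<beta> \<in> span K"
    then show "\<alpha> \<in> \<Phi> \<inter> span I \<longleftrightarrow> \<beta> \<in> \<Phi> \<inter> span I"
      using proj_saturatedD[OF satK] unfolding pos_sub by blast
  qed
next
  note pos_sub = pos_roots_sub_qrs_iff[OF R I]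
  assume satK: "proj_saturated (sub_qrs R I) I K (\<Phi> \<inter> span I)"
  show "proj_saturated R S K \<Phi>"
    unfolding proj_saturated_def
  proof (intro ballI impI)
    fix \<alpha> \<beta> assume \<alpha>\<beta>: "\<alpha> \<in> pos_roots R S" "\<beta> \<in> pos_roots R S" "\<alpha> \<notin> span K" "\<alpha> - \<beta> \<in> span K"
    have "\<alpha> - \<beta> \<in> span I" using \<alpha>\<beta>(4) span_mono[OF K] by blast
    show "\<alpha> \<in> \<Phi> \<longleftrightarrow> \<beta> \<in> \<Phi>"
    proof (cases "\<alpha> \<in> span I")
      case True
      then have "\<alpha> - (\<alpha> - \<beta>) \<in> span I" using \<open>\<alpha> - \<beta> \<in> span I\<close> by (rule span_diff)
      then have "\<beta> \<in> span I" by simp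
      then show ?thesis
        using proj_saturatedD[OF satK _ _ \<alpha>\<beta>(3,4)] \<alpha>\<beta>(1,2) True unfolding pos_sub by blast
    next
      case False
      show ?thesis by (rule proj_saturatedD[OF satI \<alpha>\<beta>(1,2) False \<open>\<alpha> - \<beta> \<in> span I\<close>])
    qed
  qed
qed

lemma Gen_sub_qrs_iff:
  assumes R: "signed_base R S" and args: "infl_args R S I \<Psi> X" and \<Phi>: "\<Phi> = infl R S I \<Psi> X"
    and K: "K \<subseteq> I"
  shows "K \<in> Gen R S \<Phi> \<longleftrightarrow> K \<in> Gen (sub_qrs R I) I X"
proof -
  have I: "I \<subseteq> S" and X: "X \<subseteq> pos_roots (sub_qrs R I) I"
    using args unfolding infl_args_def by blast+
  have \<Phi>R: "\<Phi> \<subseteq> pos_roots R S" using infl_subset_pos_roots[OF R args] \<Phi> by simp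
  have "K \<in> Gen R S \<Phi> \<longleftrightarrow> proj_saturated R S K \<Phi>"
    using Gen_iff_proj_saturated[OF R \<Phi>R] K I by blast
  also have "\<dots> \<longleftrightarrow> proj_saturated (sub_qrs R I) I K X"
    using proj_saturated_sub_qrs_iff[OF R I K proj_saturated_infl[OF R args]] infl_inter_span[OF R args]
    unfolding \<Phi> by simp
  also have "\<dots> \<longleftrightarrow> K \<in> Gen (sub_qrs R I) I X"
    using Gen_iff_proj_saturated[OF signed_base_sub_qrs[OF R I] X K] by simp
  finally show ?thesis .
qed

lemma proj_saturated_above_primitive:
  assumes R: "signed_base R S" and args: "infl_args R S I \<Psi> X" and \<Phi>: "\<Phi> = infl R S I \<Psi> X"
    and prim: "primitive (quot_qrs R I) (quot_base S I) \<Psi>"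
    and L: "I \<subseteq> L" "L \<subseteq> S" and sat: "proj_saturated R S L \<Phi>"
  shows "L = I \<or> L = S"
proof -
  have I: "I \<subseteq> S" and \<Psi>: "\<Psi> \<subseteq> pos_roots (quot_qrs R I) (quot_base S I)"
    using args unfolding infl_args_def by blast+
  let ?p = "perp_proj I"
  have R': "signed_base (quot_qrs R I) (quot_base S I)" by (rule signed_base_quot_qrs[OF R I])
  have L': "?p ` (L - I) \<subseteq> quot_base S I" using L unfolding quot_base_def by blast
  have "proj_saturated (quot_qrs R I) (quot_base S I) (?p ` (L - I)) \<Psi>"
    unfolding proj_saturated_def
  proof (intro ballI impI)
    fix \<beta> \<beta>' assume \<beta>: "\<beta> \<in> pos_roots (quot_qrs R I) (quot_base S I)"
      "\<beta>' \<in> pos_roots (quot_qrs R I) (quot_base S I)" "\<beta> \<notin> span (?p ` (L - I))"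
      "\<beta> - \<beta>' \<in> span (?p ` (L - I))"
    obtain \<alpha> where \<alpha>: "\<alpha> \<in> pos_roots R S" "\<alpha> \<notin> span I" "?p \<alpha> = \<beta>"
      using pos_roots_quot_lift[OF R I \<beta>(1)] by blast
    obtain \<alpha>' where \<alpha>': "\<alpha>' \<in> pos_roots R S" "\<alpha>' \<notin> span I" "?p \<alpha>' = \<beta>'"
      using pos_roots_quot_lift[OF R I \<beta>(2)] by blast
    have IL: "I \<union> (L - I) = L" using L(1) by blast
    have "?p (\<alpha> - \<alpha>') = \<beta> - \<beta>'" using \<alpha>(3) \<alpha>'(3) by (simp add: perp_proj_diff)
    then have "\<alpha> \<notin> span L" "\<alpha> - \<alpha>' \<in> span L"
      using \<beta>(3,4) \<alpha>(3) perp_proj_in_span_image_iff[of I _ "L - I"] unfolding IL by metis+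
    then have "\<alpha> \<in> \<Phi> \<longleftrightarrow> \<alpha>' \<in> \<Phi>" by (rule proj_saturatedD[OF sat \<alpha>(1) \<alpha>'(1)])
    then show "\<beta> \<in> \<Psi> \<longleftrightarrow> \<beta>' \<in> \<Psi>"
      using mem_infl_iff[OF R args] \<alpha> \<alpha>' \<Phi> by blast
  qed
  then have "?p ` (L - I) \<in> Gen (quot_qrs R I) (quot_base S I) \<Psi>"
    using Gen_iff_proj_saturated[OF R' \<Psi> L'] by blast
  then have "?p ` (L - I) = {} \<or> ?p ` (L - I) = quot_base S I"
    using prim unfolding primitive_def Gen_def by blast
  moreover have "?p ` (L - I) = quot_base S I \<Longrightarrow> L - I = S - I"
    using inj_on_image_eq_iff[OF inj_on_perp_proj[OF signed_baseD(2)[OF R] I], of "L - I" "S - I"] L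
    unfolding quot_base_def by blast
  ultimately show ?thesis using L by blast
qed

lemma primitive_infl_nonconstant:
  assumes R: "signed_base R S" and args: "infl_args R S I \<Psi> X" and \<Phi>: "\<Phi> = infl R S I \<Psi> X"
    and prim: "primitive (quot_qrs R I) (quot_base S I) \<Psi>"
  obtains \<alpha> \<beta> where "\<alpha> \<in> pos_roots R S" "\<beta> \<in> pos_roots R S" "\<alpha> \<notin> span I" "\<beta> \<notin> span I"
    "\<alpha> \<in> \<Phi>" "\<beta> \<notin> \<Phi>"
proof -
  have I: "I \<subseteq> S" and \<Psi>: "\<Psi> \<subseteq> pos_roots (quot_qrs R I) (quot_base S I)"
    using args unfolding infl_args_def by blast+
  obtain \<gamma> \<gamma>' where "\<gamma> \<in> \<Psi>" "\<gamma>' \<in> pos_roots (quot_qrs R I) (quot_base S I)" "\<gamma>' \<notin> \<Psi>"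
    using prim \<Psi> unfolding primitive_def by blast
  moreover obtain \<alpha> where "\<alpha> \<in> pos_roots R S" "\<alpha> \<notin> span I" "perp_proj I \<alpha> = \<gamma>"
    using pos_roots_quot_lift[OF R I] \<open>\<gamma> \<in> \<Psi>\<close> \<Psi> by blast
  moreover obtain \<beta> where "\<beta> \<in> pos_roots R S" "\<beta> \<notin> span I" "perp_proj I \<beta> = \<gamma>'"
    using pos_roots_quot_lift[OF R I] \<open>\<gamma>' \<in> pos_roots (quot_qrs R I) (quot_base S I)\<close> by blast
  ultimately show ?thesis using that mem_infl_iff[OF R args] \<Phi> by blast
qed

section \<open>Root systems\<close>

lemma root_systemD:
  assumes "root_system \<Delta>"
  shows "finite \<Delta>" "0 \<notin> \<Delta>"
    "\<alpha> \<in> \<Delta> \<Longrightarrow> \<beta> \<in> \<Delta> \<Longrightarrow> \<beta> - (2 * (\<beta> \<bullet> \<alpha>) / (\<alpha> \<bullet> \<alpha>)) *\<^sub>R \<alpha> \<in> \<Delta>"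
    "\<alpha> \<in> \<Delta> \<Longrightarrow> \<beta> \<in> \<Delta> \<Longrightarrow> 2 * (\<beta> \<bullet> \<alpha>) / (\<alpha> \<bullet> \<alpha>) \<in> \<int>"
    "\<alpha> \<in> \<Delta> \<Longrightarrow> c *\<^sub>R \<alpha> \<in> \<Delta> \<Longrightarrow> c = 1 \<or> c = -1"
  using assms unfolding root_system_def by blast+

lemma root_system_uminus:
  assumes "root_system \<Delta>" "\<alpha> \<in> \<Delta>"
  shows "- \<alpha> \<in> \<Delta>"
proof -
  have "\<alpha> \<bullet> \<alpha> \<noteq> 0" using root_systemD(2)[OF assms(1)] assms(2) by auto
  then have "\<alpha> - (2 * (\<alpha> \<bullet> \<alpha>) / (\<alpha> \<bullet> \<alpha>)) *\<^sub>R \<alpha> = - \<alpha>" by (simp add: scaleR_2)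
  then show ?thesis using root_systemD(3)[OF assms(1,2,2)] by simp
qed

lemma Ints_mult_less_4:
  fixes x y :: real
  assumes "x \<in> \<int>" "y \<in> \<int>" "x > 0" "y > 0" "x * y < 4"
  shows "x = 1 \<or> y = 1"
proof -
  obtain m n where mn: "x = of_int m" "y = of_int n" using assms(1,2) Ints_cases by metis
  have "m \<ge> 1" "n \<ge> 1" "m * n < 4"
    using assms(3-5) unfolding mn by (simp_all flip: of_int_mult)
  moreover have "m * n \<ge> 2 * 2" if "m \<ge> 2" "n \<ge> 2" using that by (intro mult_mono) auto
  ultimately have "m = 1 \<or> n = 1" by linarith
  then show ?thesis unfolding mn by auto
qed

lemma root_system_inner_sq_less:
  assumes R: "root_system \<Delta>" and \<alpha>\<beta>: "\<alpha> \<in> \<Delta>" "\<beta> \<in> \<Delta>" "\<alpha> \<bullet> \<beta> > 0" "\<alpha> \<noteq> \<beta>"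
  shows "(\<alpha> \<bullet> \<beta>)\<^sup>2 < (\<alpha> \<bullet> \<alpha>) * (\<beta> \<bullet> \<beta>)"
proof -
  have n: "norm \<alpha> > 0" "norm \<beta> > 0" using root_systemD(2)[OF R] \<alpha>\<beta>(1,2) by auto
  have "\<alpha> \<bullet> \<beta> \<noteq> norm \<alpha> * norm \<beta>"
  proof
    assume "\<alpha> \<bullet> \<beta> = norm \<alpha> * norm \<beta>"
    then have "(1 / norm \<alpha>) *\<^sub>R (norm \<alpha> *\<^sub>R \<beta>) = (1 / norm \<alpha>) *\<^sub>R (norm \<beta> *\<^sub>R \<alpha>)"
      using norm_cauchy_schwarz_eq[of \<alpha> \<beta>] by simp
    then have c: "\<beta> = (norm \<beta> / norm \<alpha>) *\<^sub>R \<alpha>" using n by simp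
    then have "norm \<beta> / norm \<alpha> = 1 \<or> norm \<beta> / norm \<alpha> = -1"
      using root_systemD(5)[OF R \<alpha>\<beta>(1)] \<alpha>\<beta>(2) by metis
    moreover have "norm \<beta> / norm \<alpha> > 0" using n by simp
    ultimately have "norm \<beta> / norm \<alpha> = 1" by linarith
    then have "\<beta> = \<alpha>" using c by (metis scaleR_one)
    with \<alpha>\<beta>(4) show False by simp
  qed
  then have "\<alpha> \<bullet> \<beta> < norm \<alpha> * norm \<beta>" using norm_cauchy_schwarz[of \<alpha> \<beta>] by linarith
  then have "(\<alpha> \<bullet> \<beta>)\<^sup>2 < (norm \<alpha> * norm \<beta>)\<^sup>2" using \<alpha>\<beta>(3) by (intro power_strict_mono) auto
  then show ?thesis by (simp add: power_mult_distrib power2_norm_eq_inner)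
qed

lemma root_system_diff_mem:
  assumes R: "root_system \<Delta>" and \<alpha>\<beta>: "\<alpha> \<in> \<Delta>" "\<beta> \<in> \<Delta>" "\<alpha> \<bullet> \<beta> > 0" "\<alpha> \<noteq> \<beta>"
  shows "\<alpha> - \<beta> \<in> \<Delta>"
proof -
  define m where "m = 2 * (\<alpha> \<bullet> \<beta>) / (\<beta> \<bullet> \<beta>)"
  define n where "n = 2 * (\<beta> \<bullet> \<alpha>) / (\<alpha> \<bullet> \<alpha>)"
  have pos: "\<alpha> \<bullet> \<alpha> > 0" "\<beta> \<bullet> \<beta> > 0" using root_systemD(2)[OF R] \<alpha>\<beta>(1,2) by auto
  have "m * n = 4 * (\<alpha> \<bullet> \<beta>)\<^sup>2 / ((\<alpha> \<bullet> \<alpha>) * (\<beta> \<bullet> \<beta>))"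
    unfolding m_def n_def by (simp add: inner_commute power2_eq_square field_simps)
  also have "\<dots> < 4" using root_system_inner_sq_less[OF assms] pos by (simp add: field_simps)
  finally have "m * n < 4" .
  moreover have "m \<in> \<int>" "n \<in> \<int>"
    unfolding m_def n_def using root_systemD(4)[OF R] \<alpha>\<beta>(1,2) by blast+
  moreover have "m > 0" "n > 0" unfolding m_def n_def using \<alpha>\<beta>(3) pos by (simp_all add: inner_commute)
  ultimately have "m = 1 \<or> n = 1" using Ints_mult_less_4 by simp
  then show ?thesis
  proof
    assume "m = 1"
    with root_systemD(3)[OF R \<alpha>\<beta>(2,1)] show ?thesis unfolding m_def[symmetric] by simp
  next
    assume "n = 1"
    with root_systemD(3)[OF R \<alpha>\<beta>(1,2)] have "\<beta> - \<alpha> \<in> \<Delta>" unfolding n_def[symmetric] by simp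
    from root_system_uminus[OF R this] show ?thesis by simp
  qed
qed

lemma root_system_add_mem:
  assumes "root_system \<Delta>" "\<alpha> \<in> \<Delta>" "\<beta> \<in> \<Delta>" "\<alpha> \<bullet> \<beta> < 0" "\<alpha> \<noteq> - \<beta>"
  shows "\<alpha> + \<beta> \<in> \<Delta>"
  using root_system_diff_mem[OF assms(1,2) root_system_uminus[OF assms(1,3)]] assms(4,5) by simp

lemma root_base_inner_le_0:
  assumes R: "root_system \<Delta>" and B: "root_base \<Delta> \<Sigma>" and \<sigma>\<tau>: "\<sigma> \<in> \<Sigma>" "\<tau> \<in> \<Sigma>" "\<sigma> \<noteq> \<tau>"
  shows "\<sigma> \<bullet> \<tau> \<le> 0"
proof (rule ccontr)
  note B' = signed_baseD[OF root_base_signed_base[OF B]]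
  assume "\<not> ?thesis"
  moreover have "\<sigma> \<in> \<Delta>" "\<tau> \<in> \<Delta>" using B \<sigma>\<tau> unfolding root_base_def by auto
  ultimately have "\<sigma> - \<tau> \<in> \<Delta>" using root_system_diff_mem[OF R] \<sigma>\<tau>(3) by simp
  moreover have "representation \<Sigma> (\<sigma> - \<tau>) \<sigma> = 1" "representation \<Sigma> (\<sigma> - \<tau>) \<tau> = -1"
    using \<sigma>\<tau> B'(2) by (simp_all add: representation_diff span_base representation_basis)
  ultimately show False using B'(5) \<sigma>\<tau>(1,2) by force
qed

section \<open>Chains of simple-root steps in a coordinate box\<close>

lemma representation_add_basis:
  assumes "independent B" "x \<in> span B" "b \<in> B"
  shows "representation B (x + b) c = representation B x c + (if c = b then 1 else 0)"
  using assms by (simp add: representation_add span_base representation_basis)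

lemma representation_diff_basis:
  assumes "independent B" "x \<in> span B" "b \<in> B"
  shows "representation B (x - b) c = representation B x c - (if c = b then 1 else 0)"
  using assms by (simp add: representation_diff span_base representation_basis)

definition in_box :: "'a::euclidean_space set \<Rightarrow> ('a \<Rightarrow> real) \<Rightarrow> ('a \<Rightarrow> real) \<Rightarrow> 'a \<Rightarrow> bool" where
  "in_box \<Sigma> lo hi x \<longleftrightarrow> (\<forall>\<sigma>\<in>\<Sigma>. lo \<sigma> \<le> representation \<Sigma> x \<sigma> \<and> representation \<Sigma> x \<sigma> \<le> hi \<sigma>)"

definition coord_dist :: "'a::euclidean_space set \<Rightarrow> 'a \<Rightarrow> 'a \<Rightarrow> real" where
  "coord_dist \<Sigma> x y = (\<Sum>\<sigma>\<in>\<Sigma>. \<bar>representation \<Sigma> x \<sigma> - representation \<Sigma> y \<sigma>\<bar>)"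

lemma coord_dist_commute: "coord_dist \<Sigma> x y = coord_dist \<Sigma> y x"
  unfolding coord_dist_def by (simp add: abs_minus_commute)

lemma coord_dist_eq_0:
  assumes "finite \<Sigma>" "independent \<Sigma>" "x \<in> span \<Sigma>" "y \<in> span \<Sigma>" "coord_dist \<Sigma> x y \<le> 0"
  shows "x = y"
proof -
  have "\<forall>\<sigma>\<in>\<Sigma>. representation \<Sigma> x \<sigma> = representation \<Sigma> y \<sigma>"
    using assms(5) sum_nonneg_eq_0_iff[OF assms(1)] unfolding coord_dist_def
    by (smt (verit, ccfv_SIG) sum_nonneg)
  then show ?thesis
    using real_vector.sum_representation_eq[OF assms(2) _ assms(1) order_refl] assms(3,4)
    by (metis (no_types, lifting) sum.cong)
qed

lemma
  assumes "finite \<Sigma>" "independent \<Sigma>" "x \<in> span \<Sigma>" "y \<in> span \<Sigma>" "\<sigma> \<in> \<Sigma>"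
    and "representation \<Sigma> x \<sigma> - representation \<Sigma> y \<sigma> \<ge> 1"
  shows coord_dist_diff_basis: "coord_dist \<Sigma> (x - \<sigma>) y = coord_dist \<Sigma> x y - 1"
    and coord_dist_add_basis: "coord_dist \<Sigma> x (y + \<sigma>) = coord_dist \<Sigma> x y - 1"
proof -
  have "coord_dist \<Sigma> (x - \<sigma>) y = (\<Sum>\<rho>\<in>\<Sigma>. \<bar>representation \<Sigma> x \<rho> - representation \<Sigma> y \<rho>\<bar> - (if \<rho> = \<sigma> then 1 else 0))"
    and "coord_dist \<Sigma> x (y + \<sigma>) = (\<Sum>\<rho>\<in>\<Sigma>. \<bar>representation \<Sigma> x \<rho> - representation \<Sigma> y \<rho>\<bar> - (if \<rho> = \<sigma> then 1 else 0))"
    unfolding coord_dist_def using assms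
    by (auto simp: representation_diff_basis representation_add_basis intro!: sum.cong)
  moreover have "(\<Sum>\<rho>\<in>\<Sigma>. \<bar>representation \<Sigma> x \<rho> - representation \<Sigma> y \<rho>\<bar> - (if \<rho> = \<sigma> then 1 else 0)) =
      coord_dist \<Sigma> x y - 1"
    unfolding coord_dist_def using assms(1,5) by (simp add: sum_subtractf)
  ultimately show "coord_dist \<Sigma> (x - \<sigma>) y = coord_dist \<Sigma> x y - 1"
    and "coord_dist \<Sigma> x (y + \<sigma>) = coord_dist \<Sigma> x y - 1" by simp_all
qed

lemma
  assumes "independent \<Sigma>" "x \<in> span \<Sigma>" "y \<in> span \<Sigma>" "\<sigma> \<in> \<Sigma>"
    and "in_box \<Sigma> lo hi x" "in_box \<Sigma> lo hi y" "representation \<Sigma> x \<sigma> - representation \<Sigma> y \<sigma> \<ge> 1"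
  shows in_box_diff_basis: "in_box \<Sigma> lo hi (x - \<sigma>)"
    and in_box_add_basis: "in_box \<Sigma> lo hi (y + \<sigma>)"
  using assms unfolding in_box_def
  by (auto simp: representation_diff_basis representation_add_basis)

lemma root_diff_or_add_basis:
  assumes R: "root_system \<Delta>" and B: "root_base \<Delta> \<Sigma>" and xy: "x \<in> \<Delta>" "y \<in> \<Delta>"
    and \<tau>: "\<tau> \<in> \<Sigma>" "representation \<Sigma> x \<tau> > 0" "representation \<Sigma> y \<tau> > 0"
    and \<sigma>: "\<sigma> \<in> \<Sigma>" "representation \<Sigma> x \<sigma> - representation \<Sigma> y \<sigma> \<ge> 1" "(x - y) \<bullet> \<sigma> > 0"
  shows "x - \<sigma> \<in> \<Delta> \<or> y + \<sigma> \<in> \<Delta>"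
proof -
  note B' = signed_baseD[OF root_base_signed_base[OF B]]
  have \<sigma>\<Delta>: "\<sigma> \<in> \<Delta>" using B \<sigma>(1) unfolding root_base_def by blast
  have "x \<bullet> \<sigma> > 0 \<or> y \<bullet> \<sigma> < 0" using \<sigma>(3) unfolding inner_diff_left by linarith
  then show ?thesis
  proof
    assume "x \<bullet> \<sigma> > 0"
    have "x \<noteq> \<sigma>"
    proof
      assume "x = \<sigma>"
      then have "\<tau> = \<sigma>" using \<tau>(2) B'(2) \<sigma>(1) by (auto simp: representation_basis split: if_splits)
      then show False using \<sigma>(1,2) \<tau>(3) \<open>x = \<sigma>\<close> B'(2) by (simp add: representation_basis)
    qed
    then show ?thesis using root_system_diff_mem[OF R xy(1) \<sigma>\<Delta> \<open>x \<bullet> \<sigma> > 0\<close>] by blast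
  next
    assume "y \<bullet> \<sigma> < 0"
    have "y \<noteq> - \<sigma>"
    proof
      assume "y = - \<sigma>"
      then have "representation \<Sigma> y \<tau> \<le> 0"
        using B'(2) \<sigma>(1) by (simp add: representation_neg span_base representation_basis)
      with \<tau>(3) show False by simp
    qed
    then show ?thesis using root_system_add_mem[OF R xy(2) \<sigma>\<Delta> \<open>y \<bullet> \<sigma> < 0\<close>] by blast
  qed
qed

lemma exists_separating_basis:
  assumes B: "root_base \<Delta> \<Sigma>" and xy: "x \<in> \<Delta>" "y \<in> \<Delta>" "x \<noteq> y"
  obtains \<sigma> where "\<sigma> \<in> \<Sigma>" "representation \<Sigma> x \<sigma> - representation \<Sigma> y \<sigma> \<ge> 1" "(x - y) \<bullet> \<sigma> > 0"
    | \<sigma> where "\<sigma> \<in> \<Sigma>" "representation \<Sigma> y \<sigma> - representation \<Sigma> x \<sigma> \<ge> 1" "(y - x) \<bullet> \<sigma> > 0"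
proof -
  note B' = signed_baseD[OF root_base_signed_base[OF B]]
  define r where "r \<sigma> = representation \<Sigma> x \<sigma> - representation \<Sigma> y \<sigma>" for \<sigma>
  have sp: "x - y \<in> span \<Sigma>" using B'(3) xy(1,2) span_diff by blast
  have "(x - y) \<bullet> (x - y) = (\<Sum>\<sigma>\<in>\<Sigma>. representation \<Sigma> (x - y) \<sigma> *\<^sub>R \<sigma>) \<bullet> (x - y)"
    using real_vector.sum_representation_eq[OF B'(2) sp B'(1) order_refl] by simp
  also have "\<dots> = (\<Sum>\<sigma>\<in>\<Sigma>. r \<sigma> * (\<sigma> \<bullet> (x - y)))"
    unfolding r_def using B'(2,3) xy(1,2) by (simp add: inner_sum_left representation_diff)
  finally have "0 < (\<Sum>\<sigma>\<in>\<Sigma>. r \<sigma> * (\<sigma> \<bullet> (x - y)))"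
    using inner_gt_zero_iff[of "x - y"] xy(3) by simp
  then obtain \<sigma> where \<sigma>: "\<sigma> \<in> \<Sigma>" "r \<sigma> * (\<sigma> \<bullet> (x - y)) > 0"
    using sum_nonpos[of \<Sigma> "\<lambda>\<sigma>. r \<sigma> * (\<sigma> \<bullet> (x - y))"] by force
  have "r \<sigma> \<in> \<int>" unfolding r_def using B'(4) xy(1,2) \<sigma>(1) by simp
  moreover have "r \<sigma> \<noteq> 0" using \<sigma>(2) by auto
  ultimately have "\<bar>r \<sigma>\<bar> \<ge> 1" by (rule Ints_nonzero_abs_ge1)
  show ?thesis
  proof (cases "r \<sigma> > 0")
    case True
    then have "(x - y) \<bullet> \<sigma> > 0" using \<sigma>(2) by (simp add: inner_commute zero_less_mult_iff)
    then show ?thesis using that(1) \<sigma>(1) \<open>\<bar>r \<sigma>\<bar> \<ge> 1\<close> True unfolding r_def by simp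
  next
    case False
    then have "(y - x) \<bullet> \<sigma> > 0"
      using \<sigma>(2) by (simp add: inner_commute zero_less_mult_iff inner_diff_right)
    then show ?thesis using that(2) \<sigma>(1) \<open>\<bar>r \<sigma>\<bar> \<ge> 1\<close> False unfolding r_def by simp
  qed
qed

lemma box_step_invariant:
  assumes R: "root_system \<Delta>" and B: "root_base \<Delta> \<Sigma>" and \<tau>: "\<tau> \<in> \<Sigma>" "lo \<tau> > 0"
    and step: "\<And>\<gamma> \<sigma>. \<gamma> \<in> \<Delta> \<Longrightarrow> \<gamma> + \<sigma> \<in> \<Delta> \<Longrightarrow> in_box \<Sigma> lo hi \<gamma> \<Longrightarrow> in_box \<Sigma> lo hi (\<gamma> + \<sigma>) \<Longrightarrow>
      \<sigma> \<in> \<Sigma> \<Longrightarrow> P \<gamma> = P (\<gamma> + \<sigma>)"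
    and uv: "u \<in> \<Delta>" "v \<in> \<Delta>" "in_box \<Sigma> lo hi u" "in_box \<Sigma> lo hi v"
    and \<sigma>: "\<sigma> \<in> \<Sigma>" "representation \<Sigma> u \<sigma> - representation \<Sigma> v \<sigma> \<ge> 1" "(u - v) \<bullet> \<sigma> > 0"
  obtains u' v' where "u' \<in> \<Delta>" "v' \<in> \<Delta>" "in_box \<Sigma> lo hi u'" "in_box \<Sigma> lo hi v'"
    "coord_dist \<Sigma> u' v' = coord_dist \<Sigma> u v - 1" "P u' = P u" "P v' = P v"
proof -
  note B' = signed_baseD[OF root_base_signed_base[OF B]]
  have sp: "u \<in> span \<Sigma>" "v \<in> span \<Sigma>" using B'(3) uv(1,2) by blast+
  have "representation \<Sigma> u \<tau> > 0" "representation \<Sigma> v \<tau> > 0"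
    using uv(3,4) \<tau> unfolding in_box_def by force+
  then consider "u - \<sigma> \<in> \<Delta>" | "v + \<sigma> \<in> \<Delta>"
    using root_diff_or_add_basis[OF R B uv(1,2) \<tau>(1) _ _ \<sigma>] by blast
  then show ?thesis
  proof cases
    case 1
    have "in_box \<Sigma> lo hi (u - \<sigma>)" by (rule in_box_diff_basis[OF B'(2) sp \<sigma>(1) uv(3,4) \<sigma>(2)])
    moreover have "P (u - \<sigma>) = P u" using step[of "u - \<sigma>" \<sigma>] 1 uv(1,3) calculation \<sigma>(1) by simp
    ultimately show ?thesis
      using that 1 uv coord_dist_diff_basis[OF B'(1,2) sp \<sigma>(1,2)] by blast
  next
    case 2
    have "in_box \<Sigma> lo hi (v + \<sigma>)" by (rule in_box_add_basis[OF B'(2) sp \<sigma>(1) uv(3,4) \<sigma>(2)])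
    moreover have "P (v + \<sigma>) = P v" using step[of v \<sigma>] 2 uv(2,4) calculation \<sigma>(1) by simp
    ultimately show ?thesis
      using that 2 uv coord_dist_add_basis[OF B'(1,2) sp \<sigma>(1,2)] by blast
  qed
qed

lemma constant_on_box:
  assumes R: "root_system \<Delta>" and B: "root_base \<Delta> \<Sigma>" and \<tau>: "\<tau> \<in> \<Sigma>" "lo \<tau> > 0"
    and step: "\<And>\<gamma> \<sigma>. \<gamma> \<in> \<Delta> \<Longrightarrow> \<gamma> + \<sigma> \<in> \<Delta> \<Longrightarrow> in_box \<Sigma> lo hi \<gamma> \<Longrightarrow> in_box \<Sigma> lo hi (\<gamma> + \<sigma>) \<Longrightarrow>
      \<sigma> \<in> \<Sigma> \<Longrightarrow> P \<gamma> = P (\<gamma> + \<sigma>)"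
    and xy: "x \<in> \<Delta>" "y \<in> \<Delta>" "in_box \<Sigma> lo hi x" "in_box \<Sigma> lo hi y"
  shows "P x = P y"
proof -
  note B' = signed_baseD[OF root_base_signed_base[OF B]]
  have "P x = P y" if "x \<in> \<Delta>" "y \<in> \<Delta>" "in_box \<Sigma> lo hi x" "in_box \<Sigma> lo hi y"
    "coord_dist \<Sigma> x y \<le> of_nat n" for n x y
    using that
  proof (induction n arbitrary: x y)
    case 0
    then have "x = y" using coord_dist_eq_0[OF B'(1,2)] B'(3) by simp
    then show ?case by simp
  next
    case (Suc n)
    have shorten: "P u = P v"
      if uv: "u \<in> \<Delta>" "v \<in> \<Delta>" "in_box \<Sigma> lo hi u" "in_box \<Sigma> lo hi v" "coord_dist \<Sigma> u v \<le> of_nat (Suc n)"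
        "\<sigma> \<in> \<Sigma>" "representation \<Sigma> u \<sigma> - representation \<Sigma> v \<sigma> \<ge> 1" "(u - v) \<bullet> \<sigma> > 0" for u v \<sigma>
    proof -
      obtain u' v' where "u' \<in> \<Delta>" "v' \<in> \<Delta>" "in_box \<Sigma> lo hi u'" "in_box \<Sigma> lo hi v'"
        "coord_dist \<Sigma> u' v' = coord_dist \<Sigma> u v - 1" "P u' = P u" "P v' = P v"
        using box_step_invariant[where lo = lo and hi = hi and P = P, OF R B \<tau> step] uv(1-4,6-8) by blast
      moreover have "coord_dist \<Sigma> u' v' \<le> of_nat n" using calculation(5) uv(5) by simp
      ultimately show ?thesis using Suc.IH by metis
    qed
    show ?case
    proof (cases "x = y")
      case False
      then show ?thesis
      proof (cases rule: exists_separating_basis[OF B Suc.prems(1,2) False])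
        case (1 \<sigma>)
        then show ?thesis using shorten Suc.prems by blast
      next
        case (2 \<sigma>)
        then have "P y = P x" using shorten Suc.prems coord_dist_commute by metis
        then show ?thesis by simp
      qed
    qed simp
  qed
  then show ?thesis using xy by (meson real_nat_ceiling_ge)
qed

definition coord_between :: "'a::euclidean_space set \<Rightarrow> 'a \<Rightarrow> 'a \<Rightarrow> 'a \<Rightarrow> bool" where
  "coord_between \<Sigma> x y \<gamma> \<longleftrightarrow> (\<forall>\<rho>\<in>\<Sigma>.
     min (representation \<Sigma> x \<rho>) (representation \<Sigma> y \<rho>) \<le> representation \<Sigma> \<gamma> \<rho> \<and>
     representation \<Sigma> \<gamma> \<rho> \<le> max (representation \<Sigma> x \<rho>) (representation \<Sigma> y \<rho>))"

lemma constant_between: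
  assumes R: "root_system \<Delta>" and B: "root_base \<Delta> \<Sigma>"
    and xy: "x \<in> pos_roots \<Delta> \<Sigma>" "y \<in> pos_roots \<Delta> \<Sigma>"
    and \<tau>: "\<tau> \<in> \<Sigma>" "representation \<Sigma> x \<tau> > 0" "representation \<Sigma> y \<tau> > 0"
    and step: "\<And>\<gamma> \<sigma>. \<gamma> \<in> pos_roots \<Delta> \<Sigma> \<Longrightarrow> \<gamma> + \<sigma> \<in> pos_roots \<Delta> \<Sigma> \<Longrightarrow> \<sigma> \<in> \<Sigma> \<Longrightarrow>
      coord_between \<Sigma> x y \<gamma> \<Longrightarrow> coord_between \<Sigma> x y (\<gamma> + \<sigma>) \<Longrightarrow> P \<gamma> = P (\<gamma> + \<sigma>)"
  shows "P x = P y"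
proof -
  note pos_iff = pos_roots_iff[OF root_base_signed_base[OF B]]
  define lo where "lo \<rho> = min (representation \<Sigma> x \<rho>) (representation \<Sigma> y \<rho>)" for \<rho>
  define hi where "hi \<rho> = max (representation \<Sigma> x \<rho>) (representation \<Sigma> y \<rho>)" for \<rho>
  have box: "in_box \<Sigma> lo hi = coord_between \<Sigma> x y"
    unfolding in_box_def coord_between_def lo_def hi_def by blast
  have "lo \<tau> > 0" unfolding lo_def using \<tau>(2,3) by simp
  moreover have pos: "\<gamma> \<in> pos_roots \<Delta> \<Sigma>" if "\<gamma> \<in> \<Delta>" "in_box \<Sigma> lo hi \<gamma>" for \<gamma>
    using that xy unfolding in_box_def lo_def by (force simp: pos_iff)
  moreover have "in_box \<Sigma> lo hi x" "in_box \<Sigma> lo hi y" unfolding in_box_def lo_def hi_def by auto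
  moreover have "x \<in> \<Delta>" "y \<in> \<Delta>" using xy pos_roots_subset by blast+
  ultimately show ?thesis
    using constant_on_box[where lo = lo and hi = hi and P = P, OF R B \<tau>(1)] step unfolding box
    by blast
qed

section \<open>Raising positive roots along the Dynkin diagram\<close>

lemma pos_roots_add_basis:
  assumes R: "root_system \<Delta>" and B: "root_base \<Delta> \<Sigma>" and x: "x \<in> pos_roots \<Delta> \<Sigma>"
    and \<sigma>\<rho>: "\<sigma> \<in> \<Sigma>" "\<rho> \<in> \<Sigma>" "representation \<Sigma> x \<rho> > 0" "\<rho> \<bullet> \<sigma> < 0"
    and \<sigma>0: "\<not> representation \<Sigma> x \<sigma> > 0"
  shows "x + \<sigma> \<in> pos_roots \<Delta> \<Sigma>"
proof -
  note B' = signed_baseD[OF root_base_signed_base[OF B]]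
  note pos_iff = pos_roots_iff[OF root_base_signed_base[OF B]]
  have x\<Delta>: "x \<in> \<Delta>" and xpos: "\<forall>\<sigma>\<in>\<Sigma>. 0 \<le> representation \<Sigma> x \<sigma>" using x by (simp_all add: pos_iff)
  have c0: "representation \<Sigma> x \<sigma> = 0" using xpos \<sigma>\<rho>(1) \<sigma>0 by force
  have nonpos: "representation \<Sigma> x \<rho>' * (\<rho>' \<bullet> \<sigma>) \<le> 0" if "\<rho>' \<in> \<Sigma>" for \<rho>'
  proof (cases "\<rho>' = \<sigma>")
    case False
    then have "\<rho>' \<bullet> \<sigma> \<le> 0" using root_base_inner_le_0[OF R B that \<sigma>\<rho>(1)] by simp
    then show ?thesis using xpos that by (simp add: mult_nonneg_nonpos)
  qed (simp add: c0)
  have "x \<bullet> \<sigma> = (\<Sum>\<rho>'\<in>\<Sigma>. representation \<Sigma> x \<rho>' *\<^sub>R \<rho>') \<bullet> \<sigma>"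
    using real_vector.sum_representation_eq[OF B'(2) B'(3)[OF x\<Delta>] B'(1) order_refl] by simp
  also have "\<dots> = representation \<Sigma> x \<rho> * (\<rho> \<bullet> \<sigma>) + (\<Sum>\<rho>'\<in>\<Sigma> - {\<rho>}. representation \<Sigma> x \<rho>' * (\<rho>' \<bullet> \<sigma>))"
    using B'(1) \<sigma>\<rho>(2) by (simp add: inner_sum_left inner_add_left sum.remove)
  also have "\<dots> < 0"
    using mult_pos_neg[OF \<sigma>\<rho>(3,4)] sum_nonpos[of "\<Sigma> - {\<rho>}"] nonpos by (smt (verit) DiffD1)
  finally have "x \<bullet> \<sigma> < 0" .
  moreover have "x \<noteq> - \<sigma>"
    using c0 B'(2) \<sigma>\<rho>(1) by (auto simp: representation_neg span_base representation_basis)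
  moreover have "\<sigma> \<in> \<Delta>" using B \<sigma>\<rho>(1) unfolding root_base_def by blast
  ultimately have "x + \<sigma> \<in> \<Delta>" using root_system_add_mem[OF R x\<Delta>] by blast
  then show ?thesis
    using xpos B'(2,3) x\<Delta> \<sigma>\<rho>(1) by (simp add: pos_iff representation_add_basis)
qed

definition height :: "'a::euclidean_space set \<Rightarrow> 'a \<Rightarrow> real" where
  "height \<Sigma> x = (\<Sum>\<sigma>\<in>\<Sigma>. representation \<Sigma> x \<sigma>)"

lemma height_add_basis:
  assumes "finite \<Sigma>" "independent \<Sigma>" "x \<in> span \<Sigma>" "\<sigma> \<in> \<Sigma>"
  shows "height \<Sigma> (x + \<sigma>) = height \<Sigma> x + 1"
  unfolding height_def using assms by (simp add: representation_add_basis sum.distrib)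

lemma card_higher_less:
  fixes h :: "'a \<Rightarrow> real"
  assumes "finite A" "x' \<in> A" "h x' > h x"
  shows "card {y \<in> A. h y > h x'} < card {y \<in> A. h y > h x}"
proof (rule psubset_card_mono)
  show "finite {y \<in> A. h y > h x}" using assms(1) by simp
  have "{y \<in> A. h y > h x'} \<subseteq> {y \<in> A. h y > h x}" using assms(3) by auto
  moreover have "x' \<in> {y \<in> A. h y > h x} - {y \<in> A. h y > h x'}" using assms(2,3) by simp
  ultimately show "{y \<in> A. h y > h x'} \<subset> {y \<in> A. h y > h x}" by blast
qed

definition support_closed :: "'a::euclidean_space set \<Rightarrow> 'a set \<Rightarrow> 'a \<Rightarrow> bool" where
  "support_closed \<Sigma> A x \<longleftrightarrow>
     (\<forall>\<sigma>\<in>\<Sigma> - A. \<forall>\<rho>\<in>\<Sigma>. representation \<Sigma> x \<rho> > 0 \<longrightarrow> \<rho> \<bullet> \<sigma> < 0 \<longrightarrow> representation \<Sigma> x \<sigma> > 0)"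

lemma exists_support_closed:
  assumes R: "root_system \<Delta>" and B: "root_base \<Delta> \<Sigma>" and a: "a \<in> \<Sigma>"
    and step: "\<And>\<gamma> \<sigma>. \<gamma> \<in> pos_roots \<Delta> \<Sigma> \<Longrightarrow> \<gamma> + \<sigma> \<in> pos_roots \<Delta> \<Sigma> \<Longrightarrow> \<sigma> \<in> \<Sigma> - A \<Longrightarrow>
      representation \<Sigma> \<gamma> a > 0 \<Longrightarrow> g \<gamma> = g (\<gamma> + \<sigma>)"
    and x: "x \<in> pos_roots \<Delta> \<Sigma>" "representation \<Sigma> x a > 0"
  shows "\<exists>z\<in>pos_roots \<Delta> \<Sigma>. representation \<Sigma> z a > 0 \<and> g z = g x \<and> support_closed \<Sigma> A z"
  using x
proof (induction "card {y \<in> \<Delta>. height \<Sigma> y > height \<Sigma> x}" arbitrary: x rule: less_induct)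
  case less
  note B' = signed_baseD[OF root_base_signed_base[OF B]]
  show ?case
  proof (cases "support_closed \<Sigma> A x")
    case True
    then show ?thesis using less.prems by blast
  next
    case False
    then obtain \<sigma> \<rho> where \<sigma>\<rho>: "\<sigma> \<in> \<Sigma> - A" "\<rho> \<in> \<Sigma>" "representation \<Sigma> x \<rho> > 0" "\<rho> \<bullet> \<sigma> < 0"
        "\<not> representation \<Sigma> x \<sigma> > 0"
      unfolding support_closed_def by blast
    have x\<Delta>: "x \<in> \<Delta>" using less.prems(1) pos_roots_subset by blast
    have up: "x + \<sigma> \<in> pos_roots \<Delta> \<Sigma>"
      using pos_roots_add_basis[OF R B less.prems(1) _ \<sigma>\<rho>(2-5)] \<sigma>\<rho>(1) by blast
    have a_up: "representation \<Sigma> (x + \<sigma>) a > 0"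
      using less.prems(2) B'(2,3) x\<Delta> \<sigma>\<rho>(1)
      by (cases "a = \<sigma>") (simp_all add: representation_add_basis)
    have g_up: "g (x + \<sigma>) = g x" using step[OF less.prems(1) up \<sigma>\<rho>(1) less.prems(2)] by simp
    have "height \<Sigma> (x + \<sigma>) > height \<Sigma> x"
      using height_add_basis[OF B'(1,2) B'(3)[OF x\<Delta>]] \<sigma>\<rho>(1) by simp
    then have "card {y \<in> \<Delta>. height \<Sigma> y > height \<Sigma> (x + \<sigma>)} < card {y \<in> \<Delta>. height \<Sigma> y > height \<Sigma> x}"
      using card_higher_less[OF root_systemD(1)[OF R]] up pos_roots_subset by blast
    then obtain z where "z \<in> pos_roots \<Delta> \<Sigma>" "representation \<Sigma> z a > 0" "g z = g (x + \<sigma>)"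
        "support_closed \<Sigma> A z"
      using less.hyps[OF _ up a_up] by blast
    then show ?thesis using g_up by auto
  qed
qed

lemma support_closed_trancl:
  assumes "support_closed \<Sigma> A x" "representation \<Sigma> x a > 0"
    and "(a, b) \<in> {(u, v). u \<in> \<Sigma> \<and> v \<in> \<Sigma> - A \<and> u \<bullet> v < 0}\<^sup>+"
  shows "representation \<Sigma> x b > 0"
  using assms(3)
proof (induction rule: trancl_induct)
  case (base b)
  then show ?case using assms(1,2) unfolding support_closed_def by blast
next
  case (step b c)
  then show ?case using assms(1) unfolding support_closed_def by blast
qed

(* Raise x and y until their supports are closed; the path then puts b into both supports, and in the
   box spanned by the raised roots every simple-root step is covered by one of the two hypotheses. *)
lemma constant_on_support:
  assumes R: "root_system \<Delta>" and B: "root_base \<Delta> \<Sigma>" and a: "a \<in> \<Sigma>"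
    and path: "(a, b) \<in> {(u, v). u \<in> \<Sigma> \<and> v \<in> \<Sigma> - A \<and> u \<bullet> v < 0}\<^sup>+"
    and outside: "\<And>\<gamma> \<sigma>. \<gamma> \<in> pos_roots \<Delta> \<Sigma> \<Longrightarrow> \<gamma> + \<sigma> \<in> pos_roots \<Delta> \<Sigma> \<Longrightarrow> \<sigma> \<in> \<Sigma> - A \<Longrightarrow>
      representation \<Sigma> \<gamma> a > 0 \<Longrightarrow> g \<gamma> = g (\<gamma> + \<sigma>)"
    and inside: "\<And>\<gamma> \<sigma>. \<gamma> \<in> pos_roots \<Delta> \<Sigma> \<Longrightarrow> \<gamma> + \<sigma> \<in> pos_roots \<Delta> \<Sigma> \<Longrightarrow> \<sigma> \<in> A \<Longrightarrow>
      representation \<Sigma> \<gamma> a > 0 \<Longrightarrow> representation \<Sigma> \<gamma> b > 0 \<Longrightarrow> g \<gamma> = g (\<gamma> + \<sigma>)"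
    and x: "x \<in> pos_roots \<Delta> \<Sigma>" "representation \<Sigma> x a > 0"
    and y: "y \<in> pos_roots \<Delta> \<Sigma>" "representation \<Sigma> y a > 0"
  shows "g x = g y"
proof -
  have b: "b \<in> \<Sigma>" using path by (induction rule: trancl_induct) auto
  obtain x' where x': "x' \<in> pos_roots \<Delta> \<Sigma>" "representation \<Sigma> x' a > 0" "g x' = g x"
      "support_closed \<Sigma> A x'"
    using exists_support_closed[where A = A and g = g, OF R B a outside x] by blast
  obtain y' where y': "y' \<in> pos_roots \<Delta> \<Sigma>" "representation \<Sigma> y' a > 0" "g y' = g y"
      "support_closed \<Sigma> A y'"
    using exists_support_closed[where A = A and g = g, OF R B a outside y] by blast
  have "representation \<Sigma> x' b > 0" "representation \<Sigma> y' b > 0"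
    using support_closed_trancl[OF x'(4,2) path] support_closed_trancl[OF y'(4,2) path] .
  then have "g \<gamma> = g (\<gamma> + \<sigma>)"
    if "\<gamma> \<in> pos_roots \<Delta> \<Sigma>" "\<gamma> + \<sigma> \<in> pos_roots \<Delta> \<Sigma>" "\<sigma> \<in> \<Sigma>" "coord_between \<Sigma> x' y' \<gamma>" for \<gamma> \<sigma>
    using outside[OF that(1,2)] inside[OF that(1,2)] that(3,4) x'(2) y'(2) a b
    unfolding coord_between_def by (smt (verit) DiffI)
  then have "g x' = g y'" using constant_between[OF R B x'(1) y'(1) a x'(2) y'(2)] by blast
  then show ?thesis using x'(3) y'(3) by simp
qed

section \<open>Quotient root systems presented by a root system\<close>

lemma orthogonal_spans:
  fixes x y :: "'a::euclidean_space"
  assumes "\<And>u v. u \<in> U \<Longrightarrow> v \<in> V \<Longrightarrow> u \<bullet> v = 0" "x \<in> span U" "y \<in> span V"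
  shows "x \<bullet> y = 0"
proof -
  have "orthogonal v x" if "v \<in> V" for v
    using orthogonal_to_span[OF assms(2)] assms(1) that by (simp add: orthogonal_def inner_commute)
  then have "orthogonal x y"
    using orthogonal_to_span[OF assms(3)] by (simp add: orthogonal_def inner_commute)
  then show ?thesis by (simp add: orthogonal_def)
qed

lemma perp_proj_in_span_orthogonal_part:
  fixes x :: "'a::euclidean_space"
  assumes J: "J \<subseteq> U \<union> V" and UV: "\<And>u v. u \<in> U \<Longrightarrow> v \<in> V \<Longrightarrow> u \<bullet> v = 0" and x: "x \<in> U"
  shows "perp_proj J x \<in> span U"
proof -
  let ?q = "perp_proj (J \<inter> U) x"
  have d: "x - ?q \<in> span (J \<inter> U)" by (rule diff_perp_proj_in_span)
  then have qU: "?q \<in> span U"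
    using span_mono[of "J \<inter> U" U] span_base[OF x] span_diff[of x U "x - ?q"] by auto
  have "?q \<bullet> u = 0" if "u \<in> J" for u
  proof (cases "u \<in> U")
    case True
    then show ?thesis using that perp_proj_orthogonal span_base by blast
  next
    case False
    then show ?thesis using that J orthogonal_spans[OF UV qU] span_base by blast
  qed
  then have "perp_proj J x = ?q"
    using d span_mono[of "J \<inter> U" J] orthogonal_to_span[of _ J ?q]
    by (intro perp_proj_eqI) (auto simp: orthogonal_def)
  then show ?thesis using qU by simp
qed

lemma perp_proj_inner_orthogonal_parts:
  fixes x y :: "'a::euclidean_space"
  assumes "J \<subseteq> U \<union> V" and UV: "\<And>u v. u \<in> U \<Longrightarrow> v \<in> V \<Longrightarrow> u \<bullet> v = 0" and "x \<in> U" "y \<in> V"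
  shows "perp_proj J x \<bullet> perp_proj J y = 0"
proof (rule orthogonal_spans[OF UV])
  show "perp_proj J x \<in> span U" using perp_proj_in_span_orthogonal_part assms by blast
  have "J \<subseteq> V \<union> U" using assms(1) by blast
  moreover have "v \<bullet> u = 0" if "v \<in> V" "u \<in> U" for v u
    using UV[OF that(2,1)] by (simp add: inner_commute)
  ultimately show "perp_proj J y \<in> span V" using perp_proj_in_span_orthogonal_part assms(4) by blast
qed

locale qrs_presentation =
  fixes \<Delta> \<Sigma> J R S :: "'a::euclidean_space set"
  assumes rs: "root_system \<Delta>" and base: "root_base \<Delta> \<Sigma>" and J: "J \<subseteq> \<Sigma>"
    and R_eq: "R = quot_qrs \<Delta> J" and S_eq: "S = quot_base \<Sigma> J"
begin

abbreviation "\<pi> \<equiv> perp_proj J"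

lemma signed_base_roots: "signed_base \<Delta> \<Sigma>"
  by (rule root_base_signed_base[OF base])

lemma signed_base_quot: "signed_base R S"
  unfolding R_eq S_eq by (rule signed_base_quot_qrs[OF signed_base_roots J])

lemma S_image: "S = \<pi> ` (\<Sigma> - J)"
  unfolding S_eq quot_base_def ..

lemma inj_on_\<pi>: "inj_on \<pi> (\<Sigma> - J)"
  by (rule inj_on_perp_proj[OF signed_baseD(2)[OF signed_base_roots] J])

lemma pos_roots_lift:
  assumes "\<alpha> \<in> pos_roots R S"
  obtains \<delta> where "\<delta> \<in> pos_roots \<Delta> \<Sigma>" "\<pi> \<delta> = \<alpha>"
  using pos_roots_quot_lift[OF signed_base_roots J] assms unfolding R_eq S_eq by metis

lemma \<pi>_pos_root_not_in_span:
  assumes \<delta>: "\<delta> \<in> pos_roots \<Delta> \<Sigma>" and c: "c \<in> \<Sigma> - J" "\<pi> c \<notin> T" "representation \<Sigma> \<delta> c > 0"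
    and T: "T \<subseteq> S"
  shows "\<pi> \<delta> \<in> pos_roots R S" "\<pi> \<delta> \<notin> span T"
proof -
  note B = signed_baseD[OF signed_base_roots]
  have "\<delta> \<in> span \<Sigma>" using \<delta> pos_roots_subset B(3) by blast
  then show nT: "\<pi> \<delta> \<notin> span T"
    using perp_proj_in_span_quot_base_iff[OF B(2) J _ T[unfolded S_eq]] c by auto
  then have "\<delta> \<notin> span J" using perp_proj_eq_0_iff span_zero by metis
  then show "\<pi> \<delta> \<in> pos_roots R S"
    using perp_proj_pos_roots[OF signed_base_roots J \<delta>] unfolding R_eq S_eq by blast
qed

lemma representation_pos_if_not_in_span_hyperplane:
  assumes \<delta>: "\<delta> \<in> pos_roots \<Delta> \<Sigma>" "\<pi> \<delta> \<notin> span (S - {\<pi> a})" and a: "a \<in> \<Sigma> - J"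
  shows "representation \<Sigma> \<delta> a > 0"
proof -
  note B = signed_baseD[OF signed_base_roots]
  have "\<delta> \<in> span \<Sigma>" using \<delta>(1) pos_roots_subset B(3) by blast
  moreover have "S - {\<pi> a} \<subseteq> quot_base \<Sigma> J" using S_eq by blast
  ultimately obtain \<sigma> where "\<sigma> \<in> \<Sigma> - J" "\<pi> \<sigma> = \<pi> a" "representation \<Sigma> \<delta> \<sigma> \<noteq> 0"
    using \<delta>(2) perp_proj_in_span_quot_base_iff[OF B(2) J] unfolding S_image by blast
  moreover from this have "\<sigma> = a" using a inj_on_\<pi> by (auto dest: inj_onD)
  ultimately show ?thesis using \<delta>(1) by (force simp: pos_roots_iff[OF signed_base_roots])
qed

lemma proj_saturated_step:
  assumes sat: "proj_saturated R S T \<Phi>" and T: "T \<subseteq> S"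
    and \<sigma>: "\<sigma> \<in> \<Sigma>" "\<sigma> \<notin> J \<Longrightarrow> \<pi> \<sigma> \<in> T"
    and \<gamma>: "\<gamma> \<in> pos_roots \<Delta> \<Sigma>" "\<gamma> + \<sigma> \<in> pos_roots \<Delta> \<Sigma>"
    and c: "c \<in> \<Sigma> - J" "\<pi> c \<notin> T" "representation \<Sigma> \<gamma> c > 0"
  shows "\<pi> \<gamma> \<in> \<Phi> \<longleftrightarrow> \<pi> (\<gamma> + \<sigma>) \<in> \<Phi>"
proof (cases "\<sigma> \<in> J")
  case True
  then have "\<pi> \<sigma> = 0" by (simp add: perp_proj_eq_0_iff span_base)
  then show ?thesis by (simp add: perp_proj_add)
next
  case False
  note B = signed_baseD[OF signed_base_roots]
  have "\<gamma> \<in> span \<Sigma>" using B(3) \<gamma>(1) pos_roots_subset by blast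
  then have "representation \<Sigma> (\<gamma> + \<sigma>) c > 0"
    using c(3) B(2) \<sigma>(1) by (cases "c = \<sigma>") (simp_all add: representation_add_basis)
  then have "\<pi> (\<gamma> + \<sigma>) \<in> pos_roots R S" "\<pi> (\<gamma> + \<sigma>) \<notin> span T"
    using \<pi>_pos_root_not_in_span[OF \<gamma>(2) c(1,2) _ T] by blast+
  moreover have "\<pi> (\<gamma> + \<sigma>) - \<pi> \<gamma> \<in> span T"
    using \<sigma>(2)[OF False] by (simp add: perp_proj_add span_base)
  ultimately show ?thesis
    using proj_saturatedD[OF sat] \<pi>_pos_root_not_in_span(1)[OF \<gamma>(1) c T] by blast
qed

(* Lifts of alpha and beta have equal coordinates at the simple roots lying over S - (I \<union> K), so the
   whole box between them projects outside span (I \<union> K), and a step by sigma changes the projection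
   by 0 or by an element of I \<union> K. *)
lemma proj_saturated_Un:
  assumes I: "I \<subseteq> S" and K: "K \<subseteq> S"
    and satI: "proj_saturated R S I \<Phi>" and satK: "proj_saturated R S K \<Phi>"
  shows "proj_saturated R S (I \<union> K) \<Phi>"
  unfolding proj_saturated_def
proof (intro ballI impI)
  fix \<alpha> \<beta> assume \<alpha>\<beta>: "\<alpha> \<in> pos_roots R S" "\<beta> \<in> pos_roots R S" "\<alpha> \<notin> span (I \<union> K)"
    "\<alpha> - \<beta> \<in> span (I \<union> K)"
  note B = signed_baseD[OF signed_base_roots]
  have T: "I \<union> K \<subseteq> S" using I K by blast
  note span_iff = perp_proj_in_span_quot_base_iff[OF B(2) J _ T[unfolded S_eq]]
  obtain \<delta> \<epsilon> where \<delta>: "\<delta> \<in> pos_roots \<Delta> \<Sigma>" "\<pi> \<delta> = \<alpha>" and \<epsilon>: "\<epsilon> \<in> pos_roots \<Delta> \<Sigma>" "\<pi> \<epsilon> = \<beta>"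
    using pos_roots_lift \<alpha>\<beta>(1,2) by metis
  have sp: "\<delta> \<in> span \<Sigma>" "\<epsilon> \<in> span \<Sigma>" using \<delta>(1) \<epsilon>(1) B(3) pos_roots_subset by blast+
  have "\<pi> (\<delta> - \<epsilon>) \<in> span (I \<union> K)" using \<alpha>\<beta>(4) \<delta>(2) \<epsilon>(2) by (simp add: perp_proj_diff)
  then have same: "representation \<Sigma> \<delta> \<sigma> = representation \<Sigma> \<epsilon> \<sigma>"
    if "\<sigma> \<in> \<Sigma> - J" "\<pi> \<sigma> \<notin> I \<union> K" for \<sigma>
    using span_iff[OF span_diff[OF sp]] that B(2) sp by (simp add: representation_diff)
  then have fixed: "representation \<Sigma> \<gamma> \<sigma> = representation \<Sigma> \<delta> \<sigma>"
    if "coord_between \<Sigma> \<delta> \<epsilon> \<gamma>" "\<sigma> \<in> \<Sigma> - J" "\<pi> \<sigma> \<notin> I \<union> K" for \<gamma> \<sigma>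
    using that unfolding coord_between_def by force
  obtain \<tau> where \<tau>: "\<tau> \<in> \<Sigma> - J" "\<pi> \<tau> \<notin> I \<union> K" "representation \<Sigma> \<delta> \<tau> \<noteq> 0"
    using span_iff[OF sp(1)] \<alpha>\<beta>(3) \<delta>(2) by blast
  then have \<tau>_pos: "representation \<Sigma> \<delta> \<tau> > 0" "representation \<Sigma> \<epsilon> \<tau> > 0"
    using same \<delta>(1) by (force simp: pos_roots_iff[OF signed_base_roots])+
  have step: "\<pi> \<gamma> \<in> \<Phi> \<longleftrightarrow> \<pi> (\<gamma> + \<sigma>) \<in> \<Phi>"
    if \<gamma>: "\<gamma> \<in> pos_roots \<Delta> \<Sigma>" "\<gamma> + \<sigma> \<in> pos_roots \<Delta> \<Sigma>" "\<sigma> \<in> \<Sigma>"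
      "coord_between \<Sigma> \<delta> \<epsilon> \<gamma>" "coord_between \<Sigma> \<delta> \<epsilon> (\<gamma> + \<sigma>)" for \<gamma> \<sigma>
  proof -
    have c: "representation \<Sigma> \<gamma> \<tau> > 0" using fixed[OF \<gamma>(4) \<tau>(1,2)] \<tau>_pos by simp
    have "\<pi> \<sigma> \<in> I \<union> K" if "\<sigma> \<notin> J"
    proof (rule ccontr)
      assume "\<pi> \<sigma> \<notin> I \<union> K"
      then have "representation \<Sigma> (\<gamma> + \<sigma>) \<sigma> = representation \<Sigma> \<gamma> \<sigma>"
        using fixed \<gamma>(3-5) that by simp
      then show False
        using B(2,3) \<gamma>(1,3) pos_roots_subset by (force simp: representation_add_basis)
    qed
    then consider "\<sigma> \<notin> J \<Longrightarrow> \<pi> \<sigma> \<in> I" | "\<pi> \<sigma> \<in> K" by blast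
    moreover have "\<pi> \<tau> \<notin> I" "\<pi> \<tau> \<notin> K" using \<tau>(2) by blast+
    ultimately show ?thesis
      using proj_saturated_step[OF satI I \<gamma>(3) _ \<gamma>(1,2) \<tau>(1) _ c]
        proj_saturated_step[OF satK K \<gamma>(3) _ \<gamma>(1,2) \<tau>(1) _ c] by metis
  qed
  have "\<pi> \<delta> \<in> \<Phi> \<longleftrightarrow> \<pi> \<epsilon> \<in> \<Phi>"
    using constant_between[OF rs base \<delta>(1) \<epsilon>(1) _ \<tau>_pos, where P = "\<lambda>\<gamma>. \<pi> \<gamma> \<in> \<Phi>"] step \<tau>(1)
    by blast
  then show "\<alpha> \<in> \<Phi> \<longleftrightarrow> \<beta> \<in> \<Phi>" using \<delta>(2) \<epsilon>(2) by simp
qed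

lemma connected_no_orthogonal_split:
  assumes conn: "qrs_connected R S" and U: "U \<subseteq> \<Sigma>"
    and orth: "\<And>u v. u \<in> U \<Longrightarrow> v \<in> \<Sigma> - U \<Longrightarrow> u \<bullet> v = 0"
    and a: "a \<in> U - J" and b: "b \<in> \<Sigma> - U - J"
  shows False
proof -
  have "(\<pi> a, \<pi> b) \<in> {(s, t). s \<in> S \<and> t \<in> S \<and> s \<bullet> t < 0}\<^sup>*"
    using conn a b U unfolding qrs_connected_def S_image by blast
  then have "\<pi> b \<in> \<pi> ` (U - J)"
  proof (induction rule: rtrancl_induct)
    case base
    then show ?case using a by blast
  next
    case (step y z)
    then obtain x where x: "x \<in> U - J" "y = \<pi> x" by blast
    obtain w where w: "w \<in> \<Sigma> - J" "z = \<pi> w" using step(2) unfolding S_image by blast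
    have "w \<in> U"
    proof (rule ccontr)
      assume "w \<notin> U"
      then have "\<pi> x \<bullet> \<pi> w = 0"
        using perp_proj_inner_orthogonal_parts[of J U "\<Sigma> - U" x w] J orth x w by blast
      then show False using step(2) x w by simp
    qed
    then show ?case using w by blast
  qed
  then obtain u where "u \<in> U - J" "\<pi> b = \<pi> u" by blast
  moreover from this have "b = u" using inj_on_\<pi> b U by (auto dest: inj_onD)
  ultimately show False using b by blast
qed

lemma exists_path_between:
  assumes conn: "qrs_connected R S" and A: "A \<subseteq> \<Sigma> - J" "A \<noteq> {}"
    and B: "B \<subseteq> \<Sigma> - J" "B \<noteq> {}" and AB: "A \<inter> B = {}"
  obtains a b where "a \<in> A" "b \<in> B" "(a, b) \<in> {(u, v). u \<in> \<Sigma> \<and> v \<in> \<Sigma> - A \<and> u \<bullet> v < 0}\<^sup>+"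
proof -
  define E where "E = {(u, v). u \<in> \<Sigma> \<and> v \<in> \<Sigma> - A \<and> u \<bullet> v < 0}"
  define U where "U = A \<union> E\<^sup>+ `` A"
  have U: "U \<subseteq> \<Sigma>"
  proof -
    have "v \<in> \<Sigma>" if "(u, v) \<in> E\<^sup>+" for u v using that by (induction rule: trancl_induct) (auto simp: E_def)
    then show ?thesis using A(1) unfolding U_def by blast
  qed
  have "\<exists>a\<in>A. \<exists>b\<in>B. (a, b) \<in> E\<^sup>+"
  proof (rule ccontr)
    assume no_path: "\<not> ?thesis"
    have orth: "u \<bullet> v = 0" if "u \<in> U" "v \<in> \<Sigma> - U" for u v
    proof -
      have "u \<bullet> v \<le> 0" using root_base_inner_le_0[OF rs base] that U by blast
      moreover have "\<not> u \<bullet> v < 0"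
      proof
        assume "u \<bullet> v < 0"
        then have "(u, v) \<in> E" using that U unfolding E_def U_def by blast
        then have "v \<in> U" using that(1) unfolding U_def by (auto intro: trancl_into_trancl)
        with that(2) show False by blast
      qed
      ultimately show ?thesis by simp
    qed
    obtain a b where "a \<in> A" "b \<in> B" using A(2) B(2) by blast
    moreover have "b \<notin> U" using \<open>b \<in> B\<close> AB no_path unfolding U_def by blast
    ultimately show False
      using connected_no_orthogonal_split[OF conn U orth, of a b] A(1) B(1) unfolding U_def by blast
  qed
  then show ?thesis using that unfolding E_def by blast
qed

(* Take a Dynkin path from a simple root a over S - I to one over S - K whose later vertices avoid A.
   On roots containing a, steps outside A project into I or to 0; steps inside A project into K and
   are absorbed by K-saturation once the end of the path lies in the support. *)
lemma proj_saturated_cover_constant: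
  assumes conn: "qrs_connected R S" and I: "I \<subseteq> S" "I \<noteq> S" and K: "K \<subseteq> S" "K \<noteq> S"
    and IK: "I \<union> K = S" and satI: "proj_saturated R S I \<Phi>" and satK: "proj_saturated R S K \<Phi>"
  obtains s where "s \<in> S - I" "\<And>\<alpha> \<beta>. \<alpha> \<in> pos_roots R S \<Longrightarrow> \<beta> \<in> pos_roots R S \<Longrightarrow>
    \<alpha> \<notin> span (S - {s}) \<Longrightarrow> \<beta> \<notin> span (S - {s}) \<Longrightarrow> \<alpha> \<in> \<Phi> \<longleftrightarrow> \<beta> \<in> \<Phi>"
proof -
  note B = signed_baseD[OF signed_base_roots]
  note pos_iff = pos_roots_iff[OF signed_base_roots]
  define A where "A = {\<sigma> \<in> \<Sigma> - J. \<pi> \<sigma> \<notin> I}"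
  define C where "C = {\<sigma> \<in> \<Sigma> - J. \<pi> \<sigma> \<notin> K}"
  have "A \<noteq> {}" "C \<noteq> {}" using I K unfolding A_def C_def S_image by blast+
  moreover have "A \<inter> C = {}" using IK unfolding A_def C_def S_image by blast
  ultimately obtain a c where a: "a \<in> A" and c: "c \<in> C"
    and path: "(a, c) \<in> {(u, v). u \<in> \<Sigma> \<and> v \<in> \<Sigma> - A \<and> u \<bullet> v < 0}\<^sup>+"
    using exists_path_between[OF conn, of A C] unfolding A_def C_def by blast
  have outside: "\<pi> \<gamma> \<in> \<Phi> \<longleftrightarrow> \<pi> (\<gamma> + \<sigma>) \<in> \<Phi>"
    if "\<gamma> \<in> pos_roots \<Delta> \<Sigma>" "\<gamma> + \<sigma> \<in> pos_roots \<Delta> \<Sigma>" "\<sigma> \<in> \<Sigma> - A"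
      "representation \<Sigma> \<gamma> a > 0" for \<gamma> \<sigma>
    by (rule proj_saturated_step[OF satI I(1) _ _ that(1,2) _ _ that(4)])
      (use that(3) a in \<open>auto simp: A_def\<close>)
  have inside: "\<pi> \<gamma> \<in> \<Phi> \<longleftrightarrow> \<pi> (\<gamma> + \<sigma>) \<in> \<Phi>"
    if "\<gamma> \<in> pos_roots \<Delta> \<Sigma>" "\<gamma> + \<sigma> \<in> pos_roots \<Delta> \<Sigma>" "\<sigma> \<in> A"
      "representation \<Sigma> \<gamma> a > 0" "representation \<Sigma> \<gamma> c > 0" for \<gamma> \<sigma>
    by (rule proj_saturated_step[OF satK K(1) _ _ that(1,2) _ _ that(5)])
      (use that(3) c IK in \<open>auto simp: A_def C_def S_image\<close>)
  show ?thesis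
  proof (rule that)
    show "\<pi> a \<in> S - I" using a unfolding A_def S_image by blast
  next
    fix \<alpha> \<beta> assume \<alpha>\<beta>: "\<alpha> \<in> pos_roots R S" "\<beta> \<in> pos_roots R S"
      "\<alpha> \<notin> span (S - {\<pi> a})" "\<beta> \<notin> span (S - {\<pi> a})"
    obtain \<delta> \<epsilon> where \<delta>: "\<delta> \<in> pos_roots \<Delta> \<Sigma>" "\<pi> \<delta> = \<alpha>" and \<epsilon>: "\<epsilon> \<in> pos_roots \<Delta> \<Sigma>" "\<pi> \<epsilon> = \<beta>"
      using pos_roots_lift \<alpha>\<beta>(1,2) by metis
    have "\<pi> \<delta> \<in> \<Phi> \<longleftrightarrow> \<pi> \<epsilon> \<in> \<Phi>"
      by (rule constant_on_support[where g = "\<lambda>\<gamma>. \<pi> \<gamma> \<in> \<Phi>", OF rs base _ path outside inside])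
        (use a \<delta> \<epsilon> \<alpha>\<beta>(3,4) representation_pos_if_not_in_span_hyperplane in \<open>auto simp: A_def\<close>)
    then show "\<alpha> \<in> \<Phi> \<longleftrightarrow> \<beta> \<in> \<Phi>" using \<delta>(2) \<epsilon>(2) by simp
  qed
qed

lemma Gen_subset_of_primitive:
  assumes conn: "qrs_connected R S" and I: "I \<subset> S" and args: "infl_args R S I \<Psi> X"
    and \<Phi>: "\<Phi> = infl R S I \<Psi> X" and prim: "primitive (quot_qrs R I) (quot_base S I) \<Psi>"
    and K: "K \<in> Gen R S \<Phi>" "K \<noteq> S"
  shows "K \<subseteq> I"
proof -
  note R = signed_base_quot
  note above_I = proj_saturated_above_primitive[OF R args \<Phi> prim]
  have \<Phi>R: "\<Phi> \<subseteq> pos_roots R S" using infl_subset_pos_roots[OF R args] \<Phi> by simp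
  have IS: "I \<subseteq> S" and KS: "K \<subseteq> S" using I K(1) unfolding Gen_def by blast+
  have satI: "proj_saturated R S I \<Phi>" using proj_saturated_infl[OF R args] \<Phi> by simp
  have satK: "proj_saturated R S K \<Phi>" using K(1) by (rule iffD1[OF Gen_iff_proj_saturated[OF R \<Phi>R KS]])
  have "I \<union> K = I \<or> I \<union> K = S"
    by (rule above_I) (use KS IS proj_saturated_Un[OF IS KS satI satK] in auto)
  moreover have "I \<union> K \<noteq> S"
  proof
    assume "I \<union> K = S"
    then obtain s where s: "s \<in> S - I" and const: "\<And>\<alpha> \<beta>. \<alpha> \<in> pos_roots R S \<Longrightarrow> \<beta> \<in> pos_roots R S \<Longrightarrow>
        \<alpha> \<notin> span (S - {s}) \<Longrightarrow> \<beta> \<notin> span (S - {s}) \<Longrightarrow> \<alpha> \<in> \<Phi> \<longleftrightarrow> \<beta> \<in> \<Phi>"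
      using proj_saturated_cover_constant[OF conn IS _ KS K(2) _ satI satK] I by blast
    have "proj_saturated R S (S - {s}) \<Phi>"
      unfolding proj_saturated_def
    proof (intro ballI impI)
      fix \<alpha> \<beta> assume "\<alpha> \<in> pos_roots R S" "\<beta> \<in> pos_roots R S" "\<alpha> \<notin> span (S - {s})"
        "\<alpha> - \<beta> \<in> span (S - {s})"
      then show "\<alpha> \<in> \<Phi> \<longleftrightarrow> \<beta> \<in> \<Phi>" using const not_in_span_if_diff_in_span by blast
    qed
    then have "S - {s} = I \<or> S - {s} = S" by (rule above_I[rotated 2]) (use s IS in auto)
    then have "S - {s} = I" using s by blast
    obtain \<alpha> \<beta> where "\<alpha> \<in> pos_roots R S" "\<beta> \<in> pos_roots R S" "\<alpha> \<notin> span I" "\<beta> \<notin> span I"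
      "\<alpha> \<in> \<Phi>" "\<beta> \<notin> \<Phi>"
      by (rule primitive_infl_nonconstant[OF R args \<Phi> prim])
    then show False using const \<open>S - {s} = I\<close> by blast
  qed
  ultimately show ?thesis by blast
qed

end

theorem proposition3p19:
  fixes R S \<Phi> I \<Psi> X :: "'a::euclidean_space set"
  assumes "qrs R S"
    and "qrs_connected R S"
    and "\<Phi> \<subseteq> pos_roots R S"
    and "canonical_form R S \<Phi> I \<Psi> X"
    and "primitive (quot_qrs R I) (quot_base S I) \<Psi>"
  shows "Gen R S \<Phi> = Gen (sub_qrs R I) I X \<union> {S}"
proof -
  obtain \<Delta> \<Sigma> J where "qrs_presentation \<Delta> \<Sigma> J R S"
    using assms(1) unfolding qrs_def qrs_presentation_def quot_qrs_def quot_base_def by blast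
  then interpret qrs_presentation \<Delta> \<Sigma> J R S .
  have I: "I \<subset> S" "infl_args R S I \<Psi> X" "\<Phi> = infl R S I \<Psi> X"
    using assms(4) unfolding canonical_form_def by auto
  have Gen_below_I: "K \<in> Gen R S \<Phi> \<longleftrightarrow> K \<in> Gen (sub_qrs R I) I X" if "K \<subseteq> I" for K
    using Gen_sub_qrs_iff[OF signed_base_quot I(2,3) that] .
  show ?thesis
  proof (intro equalityI subsetI)
    fix K assume "K \<in> Gen R S \<Phi>"
    then show "K \<in> Gen (sub_qrs R I) I X \<union> {S}"
      using Gen_subset_of_primitive[OF assms(2) I assms(5)] Gen_below_I by blast
  next
    fix K assume "K \<in> Gen (sub_qrs R I) I X \<union> {S}"
    moreover have "K \<subseteq> I" if "K \<in> Gen (sub_qrs R I) I X" using that unfolding Gen_def by blast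
    ultimately show "K \<in> Gen R S \<Phi>" using Gen_below_I S_in_Gen[OF signed_base_quot assms(3)] by blast
  qed
qed

end
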